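(* For every $f\in\mathcal F^{\,r}_{op}$, every faithful $\rho\in\mathcal D^1_n$ and every self-adjoint $A\in M_n(\mathbb C)$, $$I^f_\rho(A)\le I^{SLD}_\rho(A)\le \frac{1}{2f(0)}\,I^f_\rho(A).$$ In particular, for the Wigner–Yanase information $I^{WY}_\rho(A)=-\frac12\mathrm{Tr}([\rho^{1/2},A]^2)$ (which equals $I^{f_{WY}}_\rho(A)$ with $f_{WY}(x)=\big(\frac{1+\sqrt x}{2}\big)^2$, $f_{WY}(0)=\frac14$), one has $I^{WY}_\rho(A)\le I^{SLD}_\rho(A)\le 2 I^{WY}_\rho(A)$.
   Context: $\mathcal F_{op}$ is the class of functions $f:(0,\infty)\to(0,\infty)$ that are operator monotone, satisfy $f(1)=1$ and $tf(t^{-1})=f(t)$ for all $t>0$. $f(0):=\lim_{x\to0^+}f(x)$, and $\mathcal F^{\,r}_{op}=\{f\in\mathcal F_{op}: f(0)\neq0\}$. $\mathcal D_n^1$ is the set of strictly positive $n\times n$ density matrices. For $x,y>0$, $m_f(x,y)=xf(y/x)$; $L_\rho(X)=\rho X$, $R_\rho(X)=X\rho$, and $m_f(L_\rho,R_\rho)$ multiplies the entry $X_{ij}$ of $X$ (in an orthonormal eigenbasis of $\rho$ with eigenvalues $\lambda_i$) by $m_f(\lambda_i,\lambda_j)$. $\|X\|^2_{\rho,f}=\mathrm{Tr}\big(X^* m_f(L_\rho,R_\rho)^{-1}(X)\big)$. The $f$-information is $I^f_\rho(A)=\frac{f(0)}{2}\|i[\rho,A]\|^2_{\rho,f}$. The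 SLD-information is $I^{SLD}_\rho(A)=\frac14\mathrm{Tr}(\rho L^2)$ with $L=2(L_\rho+R_\rho)^{-1}(i[\rho,A])$; equivalently $I^{SLD}_\rho=I^{f_{SLD}}_\rho$ with $f_{SLD}(x)=\frac{1+x}{2}$. *)

theory Defs
  imports Complex_Main "Jordan_Normal_Form.Matrix"
begin

definition adj :: "complex mat \<Rightarrow> complex mat" where
  "adj A = transpose_mat (map_mat cnj A)"

definition tr :: "complex mat \<Rightarrow> complex" where
  "tr A = (\<Sum>i<dim_row A. A $$ (i,i))"

definition hermitian_mat :: "nat \<Rightarrow> complex mat \<Rightarrow> bool" where
  "hermitian_mat n A \<longleftrightarrow> A \<in> carrier_mat n n \<and> adj A = A"

definition unitary_mat :: "nat \<Rightarrow> complex mat \<Rightarrow> bool" where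
  "unitary_mat n U \<longleftrightarrow> U \<in> carrier_mat n n \<and> adj U * U = 1\<^sub>m n"

definition qform :: "nat \<Rightarrow> complex mat \<Rightarrow> (nat \<Rightarrow> complex) \<Rightarrow> complex" where
  "qform n A v = (\<Sum>i<n. \<Sum>j<n. cnj (v i) * A $$ (i,j) * v j)"

definition psd_mat :: "nat \<Rightarrow> complex mat \<Rightarrow> bool" where
  "psd_mat n A \<longleftrightarrow> hermitian_mat n A \<and> (\<forall>v. Re (qform n A v) \<ge> 0)"

definition pd_mat :: "nat \<Rightarrow> complex mat \<Rightarrow> bool" where
  "pd_mat n A \<longleftrightarrow> hermitian_mat n A \<and> (\<forall>v. (\<exists>i<n. v i \<noteq> 0) \<longrightarrow> Re (qform n A v) > 0)"

definition spectral_decomp :: "nat \<Rightarrow> complex mat \<Rightarrow> complex mat \<Rightarrow> (nat \<Rightarrow> real) \<Rightarrow> bool" where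
  "spectral_decomp n A U lam \<longleftrightarrow> unitary_mat n U \<and>
     A = U * mat_diag n (\<lambda>i. complex_of_real (lam i)) * adj U"

definition mat_fun_rel :: "(real \<Rightarrow> real) \<Rightarrow> nat \<Rightarrow> complex mat \<Rightarrow> complex mat \<Rightarrow> bool" where
  "mat_fun_rel f n A FA \<longleftrightarrow> (\<exists>U lam. spectral_decomp n A U lam \<and>
     FA = U * mat_diag n (\<lambda>i. complex_of_real (f (lam i))) * adj U)"

definition operator_monotone :: "(real \<Rightarrow> real) \<Rightarrow> bool" where
  "operator_monotone f \<longleftrightarrow> (\<forall>n A B FA FB. pd_mat n A \<and> pd_mat n B \<and> psd_mat n (B - A)
      \<and> mat_fun_rel f n A FA \<and> mat_fun_rel f n B FB \<longrightarrow> psd_mat n (FB - FA))"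

definition F_op :: "(real \<Rightarrow> real) set" where
  "F_op = {f. operator_monotone f \<and> (\<forall>x>0. f x > 0) \<and> f 1 = 1 \<and> (\<forall>t>0. t * f (1/t) = f t)}"

definition f_zero :: "(real \<Rightarrow> real) \<Rightarrow> real" where
  "f_zero f = Lim (at_right 0) f"

definition F_op_r :: "(real \<Rightarrow> real) set" where
  "F_op_r = {f \<in> F_op. f_zero f \<noteq> 0}"

definition density_mat :: "nat \<Rightarrow> complex mat \<Rightarrow> bool" where
  "density_mat n \<rho> \<longleftrightarrow> pd_mat n \<rho> \<and> tr \<rho> = 1"

definition m_f :: "(real \<Rightarrow> real) \<Rightarrow> real \<Rightarrow> real \<Rightarrow> real" where
  "m_f f x y = x * f (y / x)"

definition eig_decomp :: "nat \<Rightarrow> complex mat \<Rightarrow> complex mat \<times> (nat \<Rightarrow> real)" where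
  "eig_decomp n \<rho> = (SOME p. spectral_decomp n \<rho> (fst p) (snd p))"

text \<open>m_f(L_rho,R_rho)^{-1}(X): divide entry (i,j) of X (in the eigenbasis) by m_f(lam_i,lam_j).\<close>
definition mf_inv :: "(real \<Rightarrow> real) \<Rightarrow> nat \<Rightarrow> complex mat \<Rightarrow> complex mat \<Rightarrow> complex mat" where
  "mf_inv f n \<rho> X = (let U = fst (eig_decomp n \<rho>); lam = snd (eig_decomp n \<rho>);
       Y = adj U * X * U in
       U * mat n n (\<lambda>(i,j). Y $$ (i,j) / complex_of_real (m_f f (lam i) (lam j))) * adj U)"

definition norm2_f :: "(real \<Rightarrow> real) \<Rightarrow> nat \<Rightarrow> complex mat \<Rightarrow> complex mat \<Rightarrow> real" where
  "norm2_f f n \<rho> X = Re (tr (adj X * mf_inv f n \<rho> X))"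

definition comm :: "complex mat \<Rightarrow> complex mat \<Rightarrow> complex mat" where
  "comm X Y = X * Y - Y * X"

definition I_f :: "(real \<Rightarrow> real) \<Rightarrow> nat \<Rightarrow> complex mat \<Rightarrow> complex mat \<Rightarrow> real" where
  "I_f f n \<rho> A = f_zero f / 2 * norm2_f f n \<rho> (\<i> \<cdot>\<^sub>m comm \<rho> A)"

text \<open>SLD: L = 2 (L_rho + R_rho)^{-1}(i[rho,A]), i.e. the unique L with rho L + L rho = 2 i[rho,A].\<close>
definition SLD :: "nat \<Rightarrow> complex mat \<Rightarrow> complex mat \<Rightarrow> complex mat" where
  "SLD n \<rho> A = (THE L. L \<in> carrier_mat n n \<and> \<rho> * L + L * \<rho> = 2 \<cdot>\<^sub>m (\<i> \<cdot>\<^sub>m comm \<rho> A))"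

definition I_SLD :: "nat \<Rightarrow> complex mat \<Rightarrow> complex mat \<Rightarrow> real" where
  "I_SLD n \<rho> A = Re (tr (\<rho> * SLD n \<rho> A * SLD n \<rho> A)) / 4"

definition mat_sqrt :: "nat \<Rightarrow> complex mat \<Rightarrow> complex mat" where
  "mat_sqrt n \<rho> = (THE S. psd_mat n S \<and> S * S = \<rho>)"

definition I_WY :: "nat \<Rightarrow> complex mat \<Rightarrow> complex mat \<Rightarrow> real" where
  "I_WY n \<rho> A = - Re (tr (comm (mat_sqrt n \<rho>) A * comm (mat_sqrt n \<rho>) A)) / 2"

end

(*
  In an eigenbasis of rho, with eigenvalues lambda_i and with a_il the entries of A, each of the
  three informations is a sum  sum_il (lambda_i - lambda_l)^2 |a_il|^2 c(lambda_i, lambda_l)  that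
  differs only in the coefficient c: it is f(0) / (2 m_f(x,y)) for I^f, 1 / (2 (x + y)) for I^SLD and
  1 / (2 (sqrt x + sqrt y)^2) for I^WY.  The theorem thus reduces to the scalar bounds
  f(0) (x + y) <= m_f(x,y) <= (x + y) / 2, i.e. f(0) (1 + t) <= f(t) <= (1 + t) / 2, and
  x + y <= (sqrt x + sqrt y)^2 <= 2 (x + y).
  The bounds on f come from operator monotonicity on 2x2 matrices: comparing f(R diag(x,y) R^T) with
  f of a dominating diagonal matrix shows that f is concave up to an arbitrarily small shift, and
  concavity together with the symmetry t f(1/t) = f(t) gives both bounds.
*)
theory Submission
  imports Defs "Jordan_Normal_Form.Schur_Decomposition" "Jordan_Normal_Form.Spectral_Radius"
begin

section \<open>Adjoints, traces and quadratic forms\<close>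

lemma index_mult_mat_sum:
  assumes "A \<in> carrier_mat n k" "B \<in> carrier_mat k m" "i < n" "j < m"
  shows "(A * B) $$ (i,j) = (\<Sum>l<k. A $$ (i,l) * B $$ (l,j))"
  using assms by (auto simp: scalar_prod_def atLeast0LessThan intro!: sum.cong)

lemma mult_carrier_mat_square[simp]:
  "A \<in> carrier_mat n n \<Longrightarrow> B \<in> carrier_mat n n \<Longrightarrow> A * B \<in> carrier_mat n n"
  by simp

lemma adj_carrier[simp]: "A \<in> carrier_mat n m \<Longrightarrow> adj A \<in> carrier_mat m n"
  by (auto simp: adj_def)

lemma dim_adj[simp]: "dim_row (adj A) = dim_col A" "dim_col (adj A) = dim_row A"
  by (auto simp: adj_def)

lemma index_adj[simp]: "i < dim_col A \<Longrightarrow> j < dim_row A \<Longrightarrow> adj A $$ (i,j) = cnj (A $$ (j,i))"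
  by (auto simp: adj_def)

lemma adj_adj[simp]: "adj (adj A) = A"
  by (rule eq_matI) auto

lemma adj_one[simp]: "adj (1\<^sub>m n) = 1\<^sub>m n"
  by (rule eq_matI) auto

lemma adj_add: "A \<in> carrier_mat n m \<Longrightarrow> B \<in> carrier_mat n m \<Longrightarrow> adj (A + B) = adj A + adj B"
  by (rule eq_matI) auto

lemma adj_mat_diag_real[simp]: "adj (mat_diag n (\<lambda>i. complex_of_real (d i))) = mat_diag n (\<lambda>i. complex_of_real (d i))"
  by (rule eq_matI) (auto simp: mat_diag_def)

lemma adj_mult:
  assumes "A \<in> carrier_mat n k" "B \<in> carrier_mat k m"
  shows "adj (A * B) = adj B * adj A"
proof (rule eq_matI)
  fix i j assume "i < dim_row (adj B * adj A)" "j < dim_col (adj B * adj A)"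
  then have i: "i < m" and j: "j < n" using assms by auto
  have "adj (A * B) $$ (i,j) = (\<Sum>l<k. cnj (A $$ (j,l)) * cnj (B $$ (l,i)))"
    using assms i j by (simp add: index_mult_mat_sum[OF assms j i] cnj_sum)
  also have "\<dots> = (adj B * adj A) $$ (i,j)"
    using assms i j by (subst index_mult_mat_sum[of _ m k _ n]) (auto intro!: sum.cong simp: mult.commute)
  finally show "adj (A * B) $$ (i,j) = (adj B * adj A) $$ (i,j)" .
qed (use assms in auto)

lemma unitary_mat_carrier: "unitary_mat n U \<Longrightarrow> U \<in> carrier_mat n n"
  by (simp add: unitary_mat_def)

lemma unitary_mat_right_inverse: "unitary_mat n U \<Longrightarrow> U * adj U = 1\<^sub>m n"
  using mat_mult_left_right_inverse[of "adj U" n U] unfolding unitary_mat_def by auto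

lemma unitary_mat_one: "unitary_mat n (1\<^sub>m n)"
  by (simp add: unitary_mat_def)

lemma unitary_mat_mult:
  assumes U: "unitary_mat n U" and V: "unitary_mat n V"
  shows "unitary_mat n (U * V)"
proof -
  have Uc: "U \<in> carrier_mat n n" and Vc: "V \<in> carrier_mat n n"
    using U V by (auto simp: unitary_mat_def)
  have "adj (U * V) * (U * V) = adj V * ((adj U * U) * V)"
    using Uc Vc by (simp add: adj_mult[OF Uc Vc] assoc_mult_mat[of _ n n _ n _ n])
  also have "\<dots> = 1\<^sub>m n" using U V Vc by (simp add: unitary_mat_def)
  finally show ?thesis using Uc Vc by (simp add: unitary_mat_def)
qed

lemma tr_mult_sum:
  assumes "A \<in> carrier_mat n k" "B \<in> carrier_mat k n"
  shows "tr (A * B) = (\<Sum>i<n. \<Sum>l<k. A $$ (i,l) * B $$ (l,i))"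
  unfolding tr_def using assms index_mult_mat_sum[OF assms] by (auto intro!: sum.cong)

lemma tr_mult_commute:
  assumes A: "A \<in> carrier_mat n k" and B: "B \<in> carrier_mat k n"
  shows "tr (A * B) = tr (B * A)"
  unfolding tr_mult_sum[OF A B] tr_mult_sum[OF B A]
  by (subst sum.swap) (simp add: mult.commute)

lemma cnj_mult_self: "cnj z * z = complex_of_real ((cmod z)\<^sup>2)"
  by (subst complex_norm_square) (rule mult.commute)

lemma qform_add:
  "M \<in> carrier_mat n n \<Longrightarrow> N \<in> carrier_mat n n \<Longrightarrow> qform n (M + N) v = qform n M v + qform n N v"
  unfolding qform_def by (simp add: algebra_simps sum.distrib)

lemma qform_unit_vec:
  assumes "i < n"
  shows "qform n M (\<lambda>k. of_bool (k = i)) = M $$ (i,i)"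
proof -
  have "qform n M (\<lambda>k. of_bool (k = i)) = (\<Sum>a<n. if a = i then (\<Sum>b<n. if b = i then M $$ (a,b) else 0) else 0)"
    unfolding qform_def by (intro sum.cong refl) auto
  also have "\<dots> = M $$ (i,i)" using assms by simp
  finally show ?thesis .
qed

lemma Re_qform_mat_diag:
  "Re (qform n (mat_diag n (\<lambda>i. complex_of_real (d i))) v) = (\<Sum>i<n. d i * (cmod (v i))\<^sup>2)"
proof -
  have "qform n (mat_diag n (\<lambda>i. complex_of_real (d i))) v = (\<Sum>i<n. of_real (d i) * (cnj (v i) * v i))"
    unfolding qform_def
  proof (rule sum.cong[OF refl])
    fix i assume i: "i \<in> {..<n}"
    have "(\<Sum>j<n. cnj (v i) * mat_diag n (\<lambda>i. complex_of_real (d i)) $$ (i,j) * v j)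
        = (\<Sum>j<n. if i = j then cnj (v i) * of_real (d i) * v i else 0)"
      using i by (intro sum.cong refl) (auto simp: mat_diag_def)
    also have "\<dots> = of_real (d i) * (cnj (v i) * v i)" using i by simp
    finally show "(\<Sum>j<n. cnj (v i) * mat_diag n (\<lambda>i. complex_of_real (d i)) $$ (i,j) * v j)
        = of_real (d i) * (cnj (v i) * v i)" .
  qed
  then show ?thesis unfolding cnj_mult_self by (simp flip: of_real_mult)
qed

lemma sum_swap_pairs:
  "(\<Sum>i\<in>I. \<Sum>j\<in>J. \<Sum>a\<in>K. \<Sum>b\<in>L. f i j a b) = (\<Sum>a\<in>K. \<Sum>b\<in>L. \<Sum>j\<in>J. \<Sum>i\<in>I. f i j a b)"
proof -
  have "(\<Sum>i\<in>I. \<Sum>j\<in>J. \<Sum>a\<in>K. \<Sum>b\<in>L. f i j a b) = (\<Sum>i\<in>I. \<Sum>a\<in>K. \<Sum>j\<in>J. \<Sum>b\<in>L. f i j a b)"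
    by (rule sum.cong[OF refl], rule sum.swap)
  also have "\<dots> = (\<Sum>a\<in>K. \<Sum>i\<in>I. \<Sum>j\<in>J. \<Sum>b\<in>L. f i j a b)"
    by (rule sum.swap)
  also have "\<dots> = (\<Sum>a\<in>K. \<Sum>i\<in>I. \<Sum>b\<in>L. \<Sum>j\<in>J. f i j a b)"
    by (rule sum.cong[OF refl], rule sum.cong[OF refl], rule sum.swap)
  also have "\<dots> = (\<Sum>a\<in>K. \<Sum>b\<in>L. \<Sum>i\<in>I. \<Sum>j\<in>J. f i j a b)"
    by (rule sum.cong[OF refl], rule sum.swap)
  also have "\<dots> = (\<Sum>a\<in>K. \<Sum>b\<in>L. \<Sum>j\<in>J. \<Sum>i\<in>I. f i j a b)"
    by (rule sum.cong[OF refl], rule sum.cong[OF refl], rule sum.swap)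
  finally show ?thesis .
qed

lemma qform_adj_mult_mult:
  assumes V: "V \<in> carrier_mat n n" and M: "M \<in> carrier_mat n n"
  shows "qform n (adj V * M * V) v = qform n M (\<lambda>a. \<Sum>i<n. V $$ (a,i) * v i)"
proof -
  have entry: "(adj V * M * V) $$ (i,j) = (\<Sum>a<n. \<Sum>b<n. cnj (V $$ (a,i)) * M $$ (a,b) * V $$ (b,j))"
    if i: "i < n" and j: "j < n" for i j
  proof -
    have "(adj V * M * V) $$ (i,j) = (\<Sum>b<n. (adj V * M) $$ (i,b) * V $$ (b,j))"
      using V M i j by (subst index_mult_mat_sum[of _ n n _ n]) auto
    also have "\<dots> = (\<Sum>b<n. (\<Sum>a<n. cnj (V $$ (a,i)) * M $$ (a,b)) * V $$ (b,j))"
      using V M i j by (intro sum.cong refl, subst index_mult_mat_sum[of _ n n _ n]) auto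
    also have "\<dots> = (\<Sum>b<n. \<Sum>a<n. cnj (V $$ (a,i)) * M $$ (a,b) * V $$ (b,j))"
      by (simp add: sum_distrib_right)
    finally show ?thesis by (subst (asm) sum.swap)
  qed
  have "qform n (adj V * M * V) v
      = (\<Sum>i<n. \<Sum>j<n. \<Sum>a<n. \<Sum>b<n. cnj (V $$ (a,i) * v i) * M $$ (a,b) * (V $$ (b,j) * v j))"
    unfolding qform_def
    by (intro sum.cong refl) (simp add: entry sum_distrib_left sum_distrib_right mult_ac)
  also have "\<dots> = (\<Sum>a<n. \<Sum>b<n. \<Sum>j<n. \<Sum>i<n. cnj (V $$ (a,i) * v i) * M $$ (a,b) * (V $$ (b,j) * v j))"
    by (rule sum_swap_pairs)
  also have "\<dots> = qform n M (\<lambda>a. \<Sum>i<n. V $$ (a,i) * v i)"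
    unfolding qform_def cnj_sum sum_distrib_left sum_distrib_right by (simp add: mult_ac)
  finally show ?thesis .
qed

lemma psd_mat_diag_nonneg:
  assumes "psd_mat n M" "i < n"
  shows "0 \<le> Re (M $$ (i,i))"
proof -
  have "0 \<le> Re (qform n M (\<lambda>k. of_bool (k = i)))" using assms(1) unfolding psd_mat_def by blast
  then show ?thesis using qform_unit_vec[OF assms(2)] by simp
qed

section \<open>Scalar consequences of operator monotonicity\<close>

definition mat2 :: "complex \<Rightarrow> complex \<Rightarrow> complex \<Rightarrow> complex \<Rightarrow> complex mat" where
  "mat2 a b c d = mat 2 2 (\<lambda>(i,j). if i = 0 then (if j = 0 then a else b) else (if j = 0 then c else d))"

lemma mat2_carrier[simp]: "mat2 a b c d \<in> carrier_mat 2 2"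
  unfolding mat2_def by auto

lemma less_2_cases: "(i::nat) < 2 \<Longrightarrow> i = 0 \<or> i = 1"
  by auto

lemma mat2_eqI:
  assumes "M \<in> carrier_mat 2 2" "M $$ (0,0) = a" "M $$ (0,1) = b" "M $$ (1,0) = c" "M $$ (1,1) = d"
  shows "M = mat2 a b c d"
  by (rule eq_matI) (use assms in \<open>auto simp: mat2_def dest!: less_2_cases\<close>)

lemma index_mat2[simp]:
  "mat2 a b c d $$ (0,0) = a" "mat2 a b c d $$ (0,Suc 0) = b"
  "mat2 a b c d $$ (Suc 0,0) = c" "mat2 a b c d $$ (Suc 0,Suc 0) = d"
  by (auto simp: mat2_def)

lemma mat2_mult: "mat2 a b c d * mat2 e f g h = mat2 (a*e + b*g) (a*f + b*h) (c*e + d*g) (c*f + d*h)"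
  by (rule mat2_eqI) (auto simp: scalar_prod_def mat2_def numeral_2_eq_2)

lemma mat2_minus: "mat2 a b c d - mat2 e f g h = mat2 (a - e) (b - f) (c - g) (d - h)"
  by (rule mat2_eqI) (auto simp: mat2_def)

lemma adj_mat2: "adj (mat2 a b c d) = mat2 (cnj a) (cnj c) (cnj b) (cnj d)"
  by (rule mat2_eqI) (auto simp: adj_def mat2_def)

lemma mat_diag_2: "mat_diag 2 g = mat2 (g 0) 0 0 (g 1)"
  by (rule mat2_eqI) (auto simp: mat_diag_def)

lemma one_mat_2: "1\<^sub>m 2 = mat2 1 0 0 1"
  by (rule mat2_eqI) auto

lemma real_binary_quadratic_nonneg:
  fixes p q r a b :: real
  assumes "0 \<le> p" "0 \<le> q" "r\<^sup>2 \<le> p * q"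
  shows "0 \<le> p * a\<^sup>2 + q * b\<^sup>2 + 2 * r * a * b"
proof (cases "p = 0")
  case True
  then show ?thesis using assms by simp
next
  case False
  then have "0 < p" using assms by simp
  have "0 \<le> (p * a + r * b)\<^sup>2 + (p * q - r\<^sup>2) * b\<^sup>2" using assms by simp
  also have "\<dots> = p * (p * a\<^sup>2 + q * b\<^sup>2 + 2 * r * a * b)"
    by (simp add: algebra_simps power2_eq_square)
  finally show ?thesis using \<open>0 < p\<close> by (simp add: zero_le_mult_iff)
qed

lemma real_binary_quadratic_pos:
  fixes p q r a b :: real
  assumes "0 < p" "r\<^sup>2 < p * q" "a \<noteq> 0 \<or> b \<noteq> 0"
  shows "0 < p * a\<^sup>2 + q * b\<^sup>2 + 2 * r * a * b"
proof -
  have "0 < (p * a + r * b)\<^sup>2 + (p * q - r\<^sup>2) * b\<^sup>2"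
    using assms by (cases "b = 0") (simp_all add: add_nonneg_pos)
  also have "\<dots> = p * (p * a\<^sup>2 + q * b\<^sup>2 + 2 * r * a * b)"
    by (simp add: algebra_simps power2_eq_square)
  finally show ?thesis using assms(1) by (simp add: zero_less_mult_iff)
qed

lemma Re_qform_mat2_real:
  fixes p q r :: real
  shows "Re (qform 2 (mat2 p r r q) v) =
     (p * (Re (v 0))\<^sup>2 + q * (Re (v 1))\<^sup>2 + 2 * r * Re (v 0) * Re (v 1)) +
     (p * (Im (v 0))\<^sup>2 + q * (Im (v 1))\<^sup>2 + 2 * r * Im (v 0) * Im (v 1))"
  by (simp add: qform_def numeral_2_eq_2 algebra_simps power2_eq_square)

lemma hermitian_mat2_real: "hermitian_mat 2 (mat2 (of_real p) (of_real r) (of_real r) (of_real q))"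
  unfolding hermitian_mat_def by (simp add: adj_mat2)

lemma psd_mat2I:
  fixes p q r :: real
  assumes "0 \<le> p" "0 \<le> q" "r\<^sup>2 \<le> p * q"
  shows "psd_mat 2 (mat2 p r r q)"
  unfolding psd_mat_def Re_qform_mat2_real
  using hermitian_mat2_real real_binary_quadratic_nonneg[OF assms] by (simp add: add_nonneg_nonneg)

lemma pd_mat2I:
  fixes p q r :: real
  assumes p: "0 < p" and det: "r\<^sup>2 < p * q"
  shows "pd_mat 2 (mat2 p r r q)"
  unfolding pd_mat_def
proof (intro conjI allI impI)
  show "hermitian_mat 2 (mat2 p r r q)" by (rule hermitian_mat2_real)
  fix v :: "nat \<Rightarrow> complex" assume "\<exists>i<2. v i \<noteq> 0"
  then have "v 0 \<noteq> 0 \<or> v 1 \<noteq> 0" using less_2_cases by blast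
  then have nz: "(Re (v 0) \<noteq> 0 \<or> Re (v 1) \<noteq> 0) \<or> (Im (v 0) \<noteq> 0 \<or> Im (v 1) \<noteq> 0)"
    by (auto simp: complex_eq_iff)
  have "0 < p * q" using det zero_le_power2[of r] by linarith
  then have "0 < q" using p by (simp add: zero_less_mult_iff)
  then have nonneg: "0 \<le> p * x\<^sup>2 + q * y\<^sup>2 + 2 * r * x * y" for x y
    using p det by (intro real_binary_quadratic_nonneg) auto
  have "0 < p * (Re (v 0))\<^sup>2 + q * (Re (v 1))\<^sup>2 + 2 * r * Re (v 0) * Re (v 1)
      \<or> 0 < p * (Im (v 0))\<^sup>2 + q * (Im (v 1))\<^sup>2 + 2 * r * Im (v 0) * Im (v 1)"
    using nz real_binary_quadratic_pos[OF p det] by blast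
  then show "0 < Re (qform 2 (mat2 p r r q) v)"
    unfolding Re_qform_mat2_real
    using nonneg[of "Re (v 0)" "Re (v 1)"] nonneg[of "Im (v 0)" "Im (v 1)"] by linarith
qed

lemma rotation_mat2_unitary:
  fixes c s :: real
  assumes "c\<^sup>2 + s\<^sup>2 = 1"
  shows "unitary_mat 2 (mat2 c (- s) s c)"
proof -
  have "complex_of_real c * c + complex_of_real s * s = 1"
    using assms by (simp flip: of_real_mult of_real_add add: power2_eq_square)
  then show ?thesis
    unfolding unitary_mat_def adj_mat2 mat2_mult one_mat_2 by (simp add: algebra_simps)
qed

lemma rotation_mat2_conj_diag:
  fixes c s :: real
  shows "mat2 c (- s) s c * mat_diag 2 g * adj (mat2 c (- s) s c)
    = mat2 (c\<^sup>2 * g 0 + s\<^sup>2 * g 1) (c * s * (g 0 - g 1)) (c * s * (g 0 - g 1)) (s\<^sup>2 * g 0 + c\<^sup>2 * g 1)"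
  unfolding mat_diag_2 adj_mat2 mat2_mult by (simp add: algebra_simps power2_eq_square)

lemma mat_fun_rel_diag:
  "mat_fun_rel f n (mat_diag n (\<lambda>i. complex_of_real (d i))) (mat_diag n (\<lambda>i. complex_of_real (f (d i))))"
  unfolding mat_fun_rel_def spectral_decomp_def
  by (intro exI[of _ "1\<^sub>m n"] exI[of _ d]) (simp add: unitary_mat_one mat_diag_def)

lemma mat_fun_rel_carrier: "mat_fun_rel f n A FA \<Longrightarrow> FA \<in> carrier_mat n n"
  unfolding mat_fun_rel_def spectral_decomp_def by (auto dest!: unitary_mat_carrier)

lemma operator_monotone_diag_entry_mono:
  assumes "operator_monotone f" "pd_mat n A" "pd_mat n B" "psd_mat n (B - A)"
    and FA: "mat_fun_rel f n A FA" and FB: "mat_fun_rel f n B FB" and "i < n"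
  shows "Re (FA $$ (i,i)) \<le> Re (FB $$ (i,i))"
proof -
  have "psd_mat n (FB - FA)" using assms unfolding operator_monotone_def by blast
  then have "0 \<le> Re ((FB - FA) $$ (i,i))" using \<open>i < n\<close> by (rule psd_mat_diag_nonneg)
  then show ?thesis using mat_fun_rel_carrier[OF FA] mat_fun_rel_carrier[OF FB] \<open>i < n\<close> by simp
qed

text \<open>The witness is \<open>B = diag(a + e, b + r\<^sup>2/e + 1)\<close>: the difference \<open>B - mat2 a r r b\<close> has
  diagonal \<open>e, r\<^sup>2/e + 1\<close> and off-diagonal entries \<open>-r\<close>, so it is positive semidefinite.\<close>
lemma operator_monotone_mat2_corner:
  fixes a b r :: real
  assumes om: "operator_monotone f" and a: "0 < a" and det: "r\<^sup>2 < a * b"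
    and FA: "mat_fun_rel f 2 (mat2 a r r b) FA" and e: "0 < e"
  shows "Re (FA $$ (0,0)) \<le> f (a + e)"
proof -
  have "0 < a * b" using det zero_le_power2[of r] by linarith
  then have "0 < b" using a by (simp add: zero_less_mult_iff)
  define mu :: "nat \<Rightarrow> real" where "mu i = (if i = 0 then a + e else b + r\<^sup>2 / e + 1)" for i
  define B where "B = mat_diag 2 (\<lambda>i. complex_of_real (mu i))"
  have B_eq: "B = mat2 (a + e) 0 0 (b + r\<^sup>2 / e + 1)"
    by (simp add: B_def mat_diag_2 mu_def)
  have "0 < b + r\<^sup>2 / e + 1" using \<open>0 < b\<close> e by (simp add: add_pos_nonneg)
  then have "pd_mat 2 (mat2 (a + e) (of_real 0) (of_real 0) (b + r\<^sup>2 / e + 1))"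
    using a e by (intro pd_mat2I) auto
  then have pdB: "pd_mat 2 B" unfolding B_eq by simp
  have "B - mat2 a r r b = mat2 e (- r) (- r) (r\<^sup>2 / e + 1)"
    unfolding B_eq mat2_minus by simp
  moreover have "psd_mat 2 (mat2 e (- r) (- r) (r\<^sup>2 / e + 1))"
    using e by (intro psd_mat2I) (auto simp: field_simps)
  ultimately have "psd_mat 2 (B - mat2 a r r b)" by simp
  moreover have "pd_mat 2 (mat2 a r r b)" using a det by (rule pd_mat2I)
  ultimately have "Re (FA $$ (0,0)) \<le> Re (mat_diag 2 (\<lambda>i. complex_of_real (f (mu i))) $$ (0,0))"
    using om pdB FA mat_fun_rel_diag[of f 2 mu] unfolding B_def
    by (intro operator_monotone_diag_entry_mono) auto
  then show ?thesis by (simp add: mu_def mat_diag_def)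
qed

text \<open>Compress \<open>f(R diag(x, y) R\<^sup>T)\<close>, for the rotation \<open>R\<close> by the angle with \<open>cos\<^sup>2 = l\<close>, to its
  upper-left entry \<open>l f(x) + (1 - l) f(y)\<close>.\<close>
lemma operator_monotone_concave_approx:
  assumes om: "operator_monotone f" and x: "0 < x" and y: "0 < y"
    and l: "0 \<le> l" "l \<le> 1" and e: "0 < e"
  shows "l * f x + (1 - l) * f y \<le> f (l * x + (1 - l) * y + e)"
proof -
  define c s where "c = sqrt l" and "s = sqrt (1 - l)"
  have cs: "c\<^sup>2 = l" "s\<^sup>2 = 1 - l" using l by (simp_all add: c_def s_def)
  define R where "R = mat2 c (- s) s c"
  have R: "unitary_mat 2 R" unfolding R_def by (rule rotation_mat2_unitary) (simp add: cs)
  define lam :: "nat \<Rightarrow> real" where "lam i = (if i = 0 then x else y)" for i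
  define a11 a22 r where "a11 = l * x + (1 - l) * y" and "a22 = (1 - l) * x + l * y"
    and "r = c * s * (x - y)"
  define FA where "FA = R * mat_diag 2 (\<lambda>i. complex_of_real (f (lam i))) * adj R"
  have "R * mat_diag 2 (\<lambda>i. complex_of_real (lam i)) * adj R = mat2 a11 r r a22"
    unfolding R_def rotation_mat2_conj_diag
    by (simp add: lam_def a11_def a22_def r_def cs flip: of_real_power)
  then have FA: "mat_fun_rel f 2 (mat2 a11 r r a22) FA"
    unfolding mat_fun_rel_def spectral_decomp_def FA_def using R by metis
  have FA00: "FA $$ (0,0) = l * f x + (1 - l) * f y"
    unfolding FA_def R_def rotation_mat2_conj_diag
    by (simp add: lam_def cs flip: of_real_power)
  have "0 < a11" using x y l by (cases "l = 0") (auto simp: a11_def intro!: add_pos_nonneg)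
  have "r\<^sup>2 = l * (1 - l) * (x - y)\<^sup>2"
    unfolding r_def power_mult_distrib cs ..
  then have "a11 * a22 - r\<^sup>2 = x * y"
    by (simp add: a11_def a22_def power2_eq_square algebra_simps)
  then have "r\<^sup>2 < a11 * a22" using mult_pos_pos[OF x y] by simp
  from operator_monotone_mat2_corner[OF om \<open>0 < a11\<close> this FA e]
  show ?thesis using FA00 by (simp add: a11_def)
qed

lemma F_op_operator_monotone: "f \<in> F_op \<Longrightarrow> operator_monotone f"
  by (simp add: F_op_def)

lemma F_op_pos: "f \<in> F_op \<Longrightarrow> 0 < x \<Longrightarrow> 0 < f x"
  by (simp add: F_op_def)

lemma F_op_one: "f \<in> F_op \<Longrightarrow> f 1 = 1"
  by (simp add: F_op_def)

lemma F_op_symmetric: "f \<in> F_op \<Longrightarrow> 0 < t \<Longrightarrow> t * f (1 / t) = f t"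
  by (simp add: F_op_def)

lemma F_op_mono:
  assumes f: "f \<in> F_op" and "0 < x" "x \<le> y"
  shows "f x \<le> f y"
proof (cases "x = y")
  case False
  then have "0 < y - x" using assms by simp
  with operator_monotone_concave_approx[OF F_op_operator_monotone[OF f], of x x 1 "y - x"] \<open>0 < x\<close>
  show ?thesis by simp
qed simp

lemma F_op_divide_antimono:
  assumes f: "f \<in> F_op" and "0 < x" "x \<le> y"
  shows "f y * x \<le> f x * y"
proof -
  have "f y * x = x * y * f (1 / y)" using F_op_symmetric[OF f, of y] assms by simp
  also have "\<dots> \<le> x * y * f (1 / x)"
    using assms by (intro mult_left_mono F_op_mono[OF f]) (auto simp: field_simps)
  also have "\<dots> = f x * y" using F_op_symmetric[OF f, of x] assms by simp
  finally show ?thesis .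
qed

lemma f_zero_F_op:
  assumes f: "f \<in> F_op"
  shows "f_zero f = (INF x\<in>{0<..}. f x)"
proof -
  define L where "L = (INF x\<in>{0<..}. f x)"
  have bdd: "bdd_below (f ` {0<..})"
    using F_op_pos[OF f] by (intro bdd_belowI[of _ 0]) (auto intro: less_imp_le)
  have "(f \<longlongrightarrow> L) (at_right 0)"
  proof (rule order_tendstoI)
    fix a assume "a < L"
    then show "eventually (\<lambda>x. a < f x) (at_right 0)"
      unfolding eventually_at_right_field L_def using bdd
      by (intro exI[of _ 1]) (auto intro: less_le_trans cInf_lower)
  next
    fix a assume "L < a"
    then obtain x0 where x0: "0 < x0" "f x0 < a"
      unfolding L_def using cInf_lessD[of "f ` {0<..}" a] by auto
    have "f x < a" if "0 < x" "x < x0" for x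
      using F_op_mono[OF f, of x x0] that x0 by simp
    then show "eventually (\<lambda>x. f x < a) (at_right 0)"
      unfolding eventually_at_right_field using x0 by blast
  qed
  then show ?thesis unfolding f_zero_def L_def by (intro tendsto_Lim) auto
qed

lemma f_zero_nonneg: "f \<in> F_op \<Longrightarrow> 0 \<le> f_zero f"
  unfolding f_zero_F_op by (rule cINF_greatest) (auto intro: less_imp_le F_op_pos)

lemma f_zero_le: "f \<in> F_op \<Longrightarrow> 0 < x \<Longrightarrow> f_zero f \<le> f x"
  unfolding f_zero_F_op using F_op_pos
  by (intro cINF_lower bdd_belowI[of _ 0]) (auto intro: less_imp_le)

lemma f_zero_mult_le: "f \<in> F_op \<Longrightarrow> 0 < x \<Longrightarrow> x * f_zero f \<le> f x"
  using mult_left_mono[OF f_zero_le[of f "1 / x"], of x] F_op_symmetric[of f x] by simp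

text \<open>Concavity applied to the mean of \<open>1/t\<close> and \<open>t\<close> with weights \<open>t/(1+t)\<close> and \<open>1/(1+t)\<close>, which is
  \<open>1\<close>; symmetry turns the left-hand side into \<open>2 f(t)/(1+t)\<close>.\<close>
lemma F_op_le_arith_mean:
  assumes f: "f \<in> F_op" and t: "0 < t"
  shows "f t \<le> (1 + t) / 2"
proof -
  define l where "l = t / (1 + t)"
  have t1: "1 + t \<noteq> 0" using t by simp
  have l: "0 \<le> l" "l \<le> 1" "1 - l = 1 / (1 + t)" using t t1 by (auto simp: l_def field_simps)
  have mean: "l * (1 / t) + (1 - l) * t = 1" using t t1 by (simp add: l_def field_simps)
  have "2 * f t / (1 + t) \<le> 1 + e" if e: "0 < e" for e
  proof -
    have "l * f (1 / t) = f t / (1 + t)" using F_op_symmetric[OF f t] by (simp add: l_def)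
    then have "2 * f t / (1 + t) = l * f (1 / t) + (1 - l) * f t"
      unfolding l(3) by (simp add: add_divide_distrib[symmetric])
    also have "\<dots> \<le> f (1 + e)"
      using operator_monotone_concave_approx[OF F_op_operator_monotone[OF f], of "1 / t" t l e] t l e mean
      by simp
    also have "\<dots> \<le> 1 + e"
      using F_op_divide_antimono[OF f, of 1 "1 + e"] e F_op_one[OF f] by simp
    finally show ?thesis .
  qed
  then have "2 * f t / (1 + t) \<le> 1" by (rule field_le_epsilon)
  then show ?thesis using t by (simp add: field_simps)
qed

text \<open>For \<open>0 < h\<close> the point \<open>t\<close> is the mean of \<open>t h\<close> and \<open>t / h\<close> with weights \<open>1/(1+h)\<close> and
  \<open>h/(1+h)\<close>; bounding \<open>f\<close> below by \<open>f(0)\<close> at \<open>t h\<close> and by \<open>(t/h) f(0)\<close> at \<open>t / h\<close> and letting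
  \<open>h \<rightarrow> 0\<close> gives the claim.\<close>
lemma f_zero_mult_one_plus_le:
  assumes f: "f \<in> F_op" and t: "0 < t"
  shows "f_zero f * (1 + t) \<le> f t"
proof -
  define f0 where "f0 = f_zero f"
  define g where "g h = t / (t + h) * (f0 * (1 + t) / (1 + h))" for h
  have bound: "g h \<le> f t" if h: "0 < h" for h
  proof -
    define l where "l = 1 / (1 + h)"
    have h1: "1 + h \<noteq> 0" using h by simp
    have l: "0 \<le> l" "l \<le> 1" "1 - l = h / (1 + h)" using h h1 by (auto simp: l_def field_simps)
    have "l * (t * h) + (1 - l) * (t / h) = (t * h + t) / (1 + h)"
      unfolding l(3) using h by (simp add: l_def add_divide_distrib)
    also have "\<dots> = t" using h1 by (simp add: field_simps)
    finally have mean: "l * (t * h) + (1 - l) * (t / h) = t" .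
    have c: "(1 - l) * ((t / h) * f0) = t * f0 / (1 + h)" unfolding l(3) using h by simp
    have "f0 * (1 + t) / (1 + h) = l * f0 + (1 - l) * ((t / h) * f0)"
      unfolding c by (simp add: l_def add_divide_distrib[symmetric] algebra_simps)
    also have "\<dots> \<le> l * f (t * h) + (1 - l) * f (t / h)"
      using l h t f_zero_le[OF f, of "t * h"] f_zero_mult_le[OF f, of "t / h"]
      by (intro add_mono mult_left_mono) (auto simp: f0_def)
    also have "\<dots> \<le> f (t + h)"
      using operator_monotone_concave_approx[OF F_op_operator_monotone[OF f], of "t * h" "t / h" l h] l h t mean
      by simp
    finally have "f0 * (1 + t) / (1 + h) * t \<le> f (t + h) * t"
      by (rule mult_right_mono) (use t in simp)
    also have "\<dots> \<le> f t * (t + h)" using F_op_divide_antimono[OF f t, of "t + h"] h by simp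
    finally have "f0 * (1 + t) / (1 + h) * t \<le> f t * (t + h)" .
    then have "f0 * (1 + t) / (1 + h) * t / (t + h) \<le> f t"
      by (subst pos_divide_le_eq) (use h t in auto)
    then show ?thesis by (simp add: g_def mult_ac)
  qed
  have "(g \<longlongrightarrow> g 0) (at_right 0)"
    unfolding g_def using t by (intro tendsto_intros) auto
  moreover have "\<forall>\<^sub>F h in at_right 0. g h \<le> f t"
    using eventually_at_right_less by (rule eventually_mono) (rule bound)
  ultimately have "g 0 \<le> f t"
    by (rule tendsto_upperbound) simp
  then show ?thesis using t by (simp add: g_def f0_def)
qed

lemma m_f_F_op_bounds:
  assumes f: "f \<in> F_op" and x: "0 < x" and y: "0 < y"
  shows "f_zero f * (x + y) \<le> m_f f x y" and "m_f f x y \<le> (x + y) / 2" and "0 < m_f f x y"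
proof -
  have t: "0 < y / x" using x y by simp
  have xt: "x * (1 + y / x) = x + y" using x by (simp add: field_simps)
  have "f_zero f * (x + y) = x * (f_zero f * (1 + y / x))" using xt by (simp add: mult_ac)
  also have "\<dots> \<le> x * f (y / x)" using f_zero_mult_one_plus_le[OF f t] x by simp
  finally show "f_zero f * (x + y) \<le> m_f f x y" unfolding m_f_def .
  have "x * f (y / x) \<le> x * ((1 + y / x) / 2)" using F_op_le_arith_mean[OF f t] x by simp
  also have "\<dots> = (x + y) / 2" using xt by simp
  finally show "m_f f x y \<le> (x + y) / 2" unfolding m_f_def .
  show "0 < m_f f x y" unfolding m_f_def using F_op_pos[OF f t] x by simp
qed

lemma F_op_coeff_le_SLD_coeff:
  assumes f: "f \<in> F_op" and "0 < x" "0 < y"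
  shows "f_zero f / (2 * m_f f x y) \<le> 1 / (2 * (x + y))"
proof (cases "f_zero f = 0")
  case False
  then have f0: "0 < f_zero f" using f_zero_nonneg[OF f] by simp
  note m = m_f_F_op_bounds[OF assms]
  have "f_zero f / (2 * m_f f x y) \<le> f_zero f / (2 * (f_zero f * (x + y)))"
    using m f0 assms by (intro divide_left_mono) auto
  also have "\<dots> = 1 / (2 * (x + y))" using f0 by simp
  finally show ?thesis .
qed (use assms in simp)

lemma SLD_coeff_le_F_op_coeff:
  assumes f: "f \<in> F_op" and f0: "f_zero f \<noteq> 0" and "0 < x" "0 < y"
  shows "1 / (2 * (x + y)) \<le> 1 / (2 * f_zero f) * (f_zero f / (2 * m_f f x y))"
proof -
  note m = m_f_F_op_bounds[OF f \<open>0 < x\<close> \<open>0 < y\<close>]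
  have "1 / (2 * (x + y)) \<le> 1 / (4 * m_f f x y)"
    using m by (intro divide_left_mono) auto
  also have "\<dots> = 1 / (2 * f_zero f) * (f_zero f / (2 * m_f f x y))"
    using f0 by simp
  finally show ?thesis .
qed

lemma WY_coeff_bounds:
  fixes x y :: real
  assumes "0 < x" "0 < y"
  shows "1 / (2 * (sqrt x + sqrt y)\<^sup>2) \<le> 1 / (2 * (x + y))"
    and "1 / (2 * (x + y)) \<le> 2 * (1 / (2 * (sqrt x + sqrt y)\<^sup>2))"
proof -
  have sq: "(sqrt x + sqrt y)\<^sup>2 = x + y + 2 * (sqrt x * sqrt y)"
    using assms by (simp add: power2_eq_square algebra_simps)
  have amgm: "2 * (sqrt x * sqrt y) \<le> x + y"
    using sum_squares_ge_zero[of "sqrt x - sqrt y" 0] assms by (simp add: power2_eq_square algebra_simps)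
  have pos: "0 < sqrt x * sqrt y" "0 < x + y" using assms by simp_all
  show "1 / (2 * (sqrt x + sqrt y)\<^sup>2) \<le> 1 / (2 * (x + y))"
    unfolding sq using pos by (intro divide_left_mono) auto
  have "1 / (2 * (x + y)) \<le> 1 / (x + y + 2 * (sqrt x * sqrt y))"
    using pos amgm by (intro divide_left_mono) auto
  also have "\<dots> = 2 * (1 / (2 * (sqrt x + sqrt y)\<^sup>2))"
  proof -
    have "1 / s = 2 * (1 / (2 * s))" for s :: real by simp
    then show ?thesis unfolding sq .
  qed
  finally show "1 / (2 * (x + y)) \<le> 2 * (1 / (2 * (sqrt x + sqrt y)\<^sup>2))" .
qed

section \<open>Spectral theorem for Hermitian matrices\<close>

text \<open>The Schur decomposition of \<open>Jordan_Normal_Form\<close> is a similarity by a matrix with orthogonal but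
  not normalised columns, so unitary diagonalisation is proved directly by deflation.\<close>

lemma cscalar_prod_self:
  fixes w :: "complex vec"
  assumes "w \<in> carrier_vec n"
  shows "w \<bullet>c w = of_real (\<Sum>k<n. (cmod (w $ k))\<^sup>2)"
proof -
  have "\<And>x. w $ x * cnj (w $ x) = of_real ((cmod (w $ x))\<^sup>2)" by (rule complex_norm_square[symmetric])
  then show ?thesis using assms by (simp add: scalar_prod_def atLeast0LessThan of_real_sum del: of_real_power)
qed

lemma unitary_mat_normalize_cols:
  fixes ws :: "complex vec list"
  assumes orth: "corthogonal ws" and car: "set ws \<subseteq> carrier_vec n" and len: "length ws = n"
  defines "c \<equiv> (\<lambda>j. 1 / sqrt (\<Sum>k<n. (cmod (ws ! j $ k))\<^sup>2))"
  defines "W \<equiv> mat n n (\<lambda>(i,j). complex_of_real (c j) * (ws ! j $ i))"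
  shows "unitary_mat n W"
  unfolding unitary_mat_def
proof
  show Wc: "W \<in> carrier_mat n n" unfolding W_def by simp
  show "adj W * W = 1\<^sub>m n"
  proof (rule eq_matI)
    fix i j assume "i < dim_row (1\<^sub>m n)" "j < dim_col (1\<^sub>m n)"
    then have i: "i < n" and j: "j < n" by auto
    have wi: "ws ! i \<in> carrier_vec n" and wj: "ws ! j \<in> carrier_vec n" using car len i j by auto
    have "(adj W * W) $$ (i,j) = (\<Sum>l<n. cnj (W $$ (l,i)) * W $$ (l,j))"
      using Wc i j by (subst index_mult_mat_sum[of _ n n _ n]) auto
    also have "\<dots> = of_real (c i) * of_real (c j) * (\<Sum>l<n. ws ! j $ l * cnj (ws ! i $ l))"
      unfolding W_def using i j by (auto simp: sum_distrib_left intro!: sum.cong)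
    also have "(\<Sum>l<n. ws ! j $ l * cnj (ws ! i $ l)) = ws ! j \<bullet>c ws ! i"
      using wi wj by (simp add: scalar_prod_def atLeast0LessThan)
    finally have eq: "(adj W * W) $$ (i,j) = of_real (c i) * of_real (c j) * (ws ! j \<bullet>c ws ! i)" .
    show "(adj W * W) $$ (i,j) = 1\<^sub>m n $$ (i,j)"
    proof (cases "i = j")
      case False
      then have "ws ! j \<bullet>c ws ! i = 0" using corthogonalD[OF orth, of j i] len i j by auto
      then show ?thesis using eq i j False by simp
    next
      case True
      have nz: "ws ! i \<bullet>c ws ! i \<noteq> 0" using corthogonalD[OF orth, of i i] len i by auto
      define N where "N = (\<Sum>k<n. (cmod (ws ! i $ k))\<^sup>2)"
      have "ws ! i \<bullet>c ws ! i = of_real N" unfolding N_def by (rule cscalar_prod_self[OF wi])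
      with nz have N0: "N \<noteq> 0" by auto
      have "N \<ge> 0" unfolding N_def by (simp add: sum_nonneg)
      with N0 have Np: "N > 0" by simp
      have ci: "c i = 1 / sqrt N" unfolding c_def N_def by simp
      have "of_real (c i) * of_real (c i) * (ws ! i \<bullet>c ws ! i) = complex_of_real (c i * c i * N)"
        using \<open>ws ! i \<bullet>c ws ! i = of_real N\<close> by simp
      also have "c i * c i * N = 1" unfolding ci using Np
        by (simp add: field_simps real_sqrt_mult[symmetric])
      finally show ?thesis using eq True i by simp
    qed
  qed (use Wc in auto)
qed

lemma unitary_mat_first_col:
  fixes v :: "complex vec"
  assumes v: "v \<in> carrier_vec n" and v0: "v \<noteq> 0\<^sub>v n"
  shows "\<exists>W c. unitary_mat n W \<and> (\<forall>k<n. W $$ (k,0) = complex_of_real c * v $ k)"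
proof -
  interpret cof_vec_space n "TYPE(complex)" .
  define b where "b = basis_completion v"
  from basis_completion[OF v v0, folded b_def]
  have dist_b: "distinct b" and bas: "basis (set b)" and b: "set b \<subseteq> carrier_vec n" by auto
  from bas have indep: "\<not> lin_dep (set b)" unfolding basis_def by auto
  have len_b: "length b = n"
    using bas dim_is_n distinct_card[OF dist_b] b
    by (metis basis_def dim_basis finite_set)
  have n: "n > 0"
  proof (rule ccontr)
    assume "\<not> n > 0" then have "n = 0" by simp
    then have "v = 0\<^sub>v n" using v by auto
    with v0 show False by simp
  qed
  from len_b n obtain vs where bv: "b = v # vs" unfolding b_def basis_completion_def Let_def by auto
  define ws where "ws = gram_schmidt n b"
  from gram_schmidt_result[OF b dist_b indep ws_def]
  have ws: "set ws \<subseteq> carrier_vec n" "corthogonal ws" "length ws = n" by (auto simp: len_b)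
  have hd: "hd ws = v" unfolding ws_def bv using gram_schmidt_hd[OF v] by simp
  have ws0: "ws ! 0 = v" using hd ws(3) n by (metis hd_conv_nth list.size(3) not_less_zero)
  define c where "c = (\<lambda>j. 1 / sqrt (\<Sum>k<n. (cmod (ws ! j $ k))\<^sup>2))"
  define W where "W = mat n n (\<lambda>(i,j). complex_of_real (c j) * (ws ! j $ i))"
  have "unitary_mat n W" unfolding W_def c_def by (rule unitary_mat_normalize_cols[OF ws(2,1,3)])
  moreover have "\<forall>k<n. W $$ (k,0) = complex_of_real (c 0) * v $ k"
    unfolding W_def using n ws0 by auto
  ultimately show ?thesis by blast
qed

definition block_diag1 :: "complex \<Rightarrow> complex mat \<Rightarrow> complex mat" where
  "block_diag1 c M = mat (Suc (dim_row M)) (Suc (dim_col M))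
     (\<lambda>(i,j). if i = 0 \<and> j = 0 then c else if i = 0 \<or> j = 0 then 0 else M $$ (i - 1, j - 1))"

lemma block_diag1_carrier[simp]: "M \<in> carrier_mat n m \<Longrightarrow> block_diag1 c M \<in> carrier_mat (Suc n) (Suc m)"
  by (auto simp: block_diag1_def)

lemma dim_block_diag1[simp]:
  "dim_row (block_diag1 c M) = Suc (dim_row M)" "dim_col (block_diag1 c M) = Suc (dim_col M)"
  by (auto simp: block_diag1_def)

lemma index_block_diag1[simp]:
  "block_diag1 c M $$ (0,0) = c"
  "j < dim_col M \<Longrightarrow> block_diag1 c M $$ (0, Suc j) = 0"
  "i < dim_row M \<Longrightarrow> block_diag1 c M $$ (Suc i, 0) = 0"
  "i < dim_row M \<Longrightarrow> j < dim_col M \<Longrightarrow> block_diag1 c M $$ (Suc i, Suc j) = M $$ (i,j)"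
  by (auto simp: block_diag1_def)

lemma block_diag1_eqI:
  assumes "A \<in> carrier_mat (Suc n) (Suc m)" "M \<in> carrier_mat n m" "A $$ (0,0) = c"
    and "\<And>j. j < m \<Longrightarrow> A $$ (0, Suc j) = 0" "\<And>i. i < n \<Longrightarrow> A $$ (Suc i, 0) = 0"
    and "\<And>i j. i < n \<Longrightarrow> j < m \<Longrightarrow> A $$ (Suc i, Suc j) = M $$ (i,j)"
  shows "A = block_diag1 c M"
proof (rule eq_matI)
  fix i j assume "i < dim_row (block_diag1 c M)" "j < dim_col (block_diag1 c M)"
  then show "A $$ (i,j) = block_diag1 c M $$ (i,j)"
    using assms by (cases i; cases j) auto
qed (use assms in auto)

lemma block_diag1_mult:
  assumes M: "M \<in> carrier_mat n k" and N: "N \<in> carrier_mat k m"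
  shows "block_diag1 a M * block_diag1 b N = block_diag1 (a * b) (M * N)"
proof (rule block_diag1_eqI[of _ n m])
  have entry: "(block_diag1 a M * block_diag1 b N) $$ (i,j)
      = block_diag1 a M $$ (i,0) * block_diag1 b N $$ (0,j)
        + (\<Sum>l<k. block_diag1 a M $$ (i, Suc l) * block_diag1 b N $$ (Suc l, j))"
    if "i < Suc n" "j < Suc m" for i j
  proof -
    have "(block_diag1 a M * block_diag1 b N) $$ (i,j)
        = (\<Sum>l<Suc k. block_diag1 a M $$ (i,l) * block_diag1 b N $$ (l,j))"
      using M N that by (intro index_mult_mat_sum) auto
    then show ?thesis by (simp only: sum.lessThan_Suc_shift)
  qed
  show "(block_diag1 a M * block_diag1 b N) $$ (0,0) = a * b"
    using M N by (subst entry) auto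
  show "(block_diag1 a M * block_diag1 b N) $$ (0, Suc j) = 0" if "j < m" for j
    using M N that by (subst entry) auto
  show "(block_diag1 a M * block_diag1 b N) $$ (Suc i, 0) = 0" if "i < n" for i
    using M N that by (subst entry) auto
  show "(block_diag1 a M * block_diag1 b N) $$ (Suc i, Suc j) = (M * N) $$ (i,j)" if "i < n" "j < m" for i j
    using M N that index_mult_mat_sum[OF M N, of i j] by (subst entry) auto
qed (use M N in auto)

lemma adj_block_diag1: "adj (block_diag1 c M) = block_diag1 (cnj c) (adj M)"
  by (rule block_diag1_eqI[of _ "dim_col M" "dim_row M"]) auto

lemma block_diag1_one: "block_diag1 1 (1\<^sub>m n) = 1\<^sub>m (Suc n)"
  by (rule block_diag1_eqI[symmetric, of _ n n]) auto

lemma mat_diag_Suc: "mat_diag (Suc n) d = block_diag1 (d 0) (mat_diag n (\<lambda>i. d (Suc i)))"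
  by (rule block_diag1_eqI[of _ n n]) (auto simp: mat_diag_def)

lemma unitary_mat_block_diag1:
  assumes "unitary_mat n U"
  shows "unitary_mat (Suc n) (block_diag1 1 U)"
  using assms unfolding unitary_mat_def
  by (simp add: adj_block_diag1 block_diag1_mult[of _ n n _ n] block_diag1_one)

definition lower_block :: "complex mat \<Rightarrow> complex mat" where
  "lower_block A = mat (dim_row A - 1) (dim_col A - 1) (\<lambda>(i,j). A $$ (Suc i, Suc j))"

lemma hermitian_mat_first_col:
  assumes herm: "hermitian_mat (Suc n) A" and col: "\<And>i. i < Suc n \<Longrightarrow> A $$ (i,0) = (if i = 0 then c else 0)"
  shows "A = block_diag1 (of_real (Re c)) (lower_block A)" and "hermitian_mat n (lower_block A)"
proof -
  have A: "A \<in> carrier_mat (Suc n) (Suc n)" and adjA: "adj A = A"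
    using herm unfolding hermitian_mat_def by auto
  have sym: "A $$ (j,i) = cnj (A $$ (i,j))" if "i < Suc n" "j < Suc n" for i j
  proof -
    have "A $$ (j,i) = adj A $$ (j,i)" by (simp only: adjA)
    also have "\<dots> = cnj (A $$ (i,j))" using A that by simp
    finally show ?thesis .
  qed
  have "cnj c = c" using sym[of 0 0] col[of 0] by simp
  then have "Im c = 0" using complex_eq_iff[of "cnj c" c] by simp
  then have c: "of_real (Re c) = c" by (simp add: complex_eq_iff)
  show "A = block_diag1 (of_real (Re c)) (lower_block A)"
  proof (rule block_diag1_eqI[of _ n n])
    show "A $$ (0, Suc j) = 0" if "j < n" for j
      using sym[of "Suc j" 0] col[of "Suc j"] that by simp
    show "A $$ (Suc i, 0) = 0" if "i < n" for i
      using col[of "Suc i"] that by simp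
  qed (use A c col[of 0] in \<open>auto simp: lower_block_def\<close>)
  show "hermitian_mat n (lower_block A)"
    unfolding hermitian_mat_def
  proof
    show "lower_block A \<in> carrier_mat n n" using A by (simp add: lower_block_def)
    show "adj (lower_block A) = lower_block A"
    proof (rule eq_matI)
      fix i j assume "i < dim_row (lower_block A)" "j < dim_col (lower_block A)"
      then show "adj (lower_block A) $$ (i,j) = lower_block A $$ (i,j)"
        using A sym[of "Suc j" "Suc i"] by (simp add: lower_block_def)
    qed (use A in \<open>auto simp: lower_block_def\<close>)
  qed
qed

lemma spectral_decomp_block_diag1:
  assumes "spectral_decomp n M U lam"
  shows "spectral_decomp (Suc n) (block_diag1 (of_real e) M) (block_diag1 1 U)
    (\<lambda>i. if i = 0 then e else lam (i - 1))"
proof -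
  have U: "unitary_mat n U" and M: "M = U * mat_diag n (\<lambda>i. complex_of_real (lam i)) * adj U"
    using assms unfolding spectral_decomp_def by auto
  have Uc: "U \<in> carrier_mat n n" using U by (rule unitary_mat_carrier)
  show ?thesis
    unfolding spectral_decomp_def mat_diag_Suc adj_block_diag1
    using unitary_mat_block_diag1[OF U] Uc
    by (simp add: M block_diag1_mult[of _ n n _ n])
qed

lemma spectral_decomp_unitary_conj:
  assumes W: "unitary_mat n W" and A: "A \<in> carrier_mat n n"
    and sd: "spectral_decomp n (adj W * A * W) U lam"
  shows "spectral_decomp n A (W * U) lam"
proof -
  have Wc: "W \<in> carrier_mat n n" using W by (rule unitary_mat_carrier)
  have U: "unitary_mat n U" and Uc: "U \<in> carrier_mat n n"
    and eq: "adj W * A * W = U * mat_diag n (\<lambda>i. complex_of_real (lam i)) * adj U"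
    using sd unitary_mat_carrier unfolding spectral_decomp_def by auto
  define D where "D = mat_diag n (\<lambda>i. complex_of_real (lam i))"
  have Dc: "D \<in> carrier_mat n n" unfolding D_def by simp
  have "A = (W * adj W) * A * (W * adj W)"
    using A unitary_mat_right_inverse[OF W] by simp
  also have "\<dots> = W * (adj W * A * W) * adj W"
    using A Wc by (simp add: assoc_mult_mat[of _ n n _ n _ n])
  also have "\<dots> = (W * U) * D * adj (W * U)"
    using Wc Uc Dc by (simp add: eq D_def adj_mult[OF Wc Uc] assoc_mult_mat[of _ n n _ n _ n])
  finally show ?thesis
    unfolding spectral_decomp_def D_def using unitary_mat_mult[OF W U] by blast
qed

lemma unitary_conj_first_col_eigen:
  assumes A: "A \<in> carrier_mat (Suc n) (Suc n)"
  obtains W e where "unitary_mat (Suc n) W"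
    and "\<And>i. i < Suc n \<Longrightarrow> (adj W * A * W) $$ (i,0) = (if i = 0 then e else 0)"
proof -
  from spectrum_non_empty[OF A] obtain e where "eigenvalue A e" unfolding spectrum_def by auto
  from find_eigenvector[OF A this] have "eigenvector A (find_eigenvector A e) e" .
  then obtain v where v: "v \<in> carrier_vec (Suc n)" "v \<noteq> 0\<^sub>v (Suc n)" and Av: "A *\<^sub>v v = e \<cdot>\<^sub>v v"
    unfolding eigenvector_def using A by auto
  from unitary_mat_first_col[OF v] obtain W c where
    W: "unitary_mat (Suc n) W" and W0: "\<forall>k<Suc n. W $$ (k,0) = complex_of_real c * v $ k" by blast
  have Wc: "W \<in> carrier_mat (Suc n) (Suc n)" using W by (rule unitary_mat_carrier)
  have AW0: "(A * W) $$ (k,0) = e * W $$ (k,0)" if k: "k < Suc n" for k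
  proof -
    have "(A * W) $$ (k,0) = (\<Sum>l<Suc n. A $$ (k,l) * W $$ (l,0))"
      by (rule index_mult_mat_sum[OF A Wc k]) simp
    also have "\<dots> = of_real c * (\<Sum>l<Suc n. A $$ (k,l) * v $ l)"
      using W0 by (simp add: sum_distrib_left algebra_simps)
    also have "(\<Sum>l<Suc n. A $$ (k,l) * v $ l) = (A *\<^sub>v v) $ k"
      using A v k by (simp add: scalar_prod_def atLeast0LessThan)
    also have "\<dots> = e * v $ k" using Av k v by simp
    finally show ?thesis using W0 k by simp
  qed
  have "(adj W * A * W) $$ (i,0) = (if i = 0 then e else 0)" if i: "i < Suc n" for i
  proof -
    have "(adj W * A * W) $$ (i,0) = (adj W * (A * W)) $$ (i,0)"
      using Wc A by (simp add: assoc_mult_mat[of _ "Suc n" "Suc n" _ "Suc n" _ "Suc n"])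
    also have "\<dots> = (\<Sum>l<Suc n. adj W $$ (i,l) * (A * W) $$ (l,0))"
      using Wc A i by (subst index_mult_mat_sum[of _ "Suc n" "Suc n" _ "Suc n"]) auto
    also have "\<dots> = e * (\<Sum>l<Suc n. adj W $$ (i,l) * W $$ (l,0))"
      using AW0 by (simp add: sum_distrib_left algebra_simps)
    also have "(\<Sum>l<Suc n. adj W $$ (i,l) * W $$ (l,0)) = (adj W * W) $$ (i,0)"
      using Wc i by (subst index_mult_mat_sum[of _ "Suc n" "Suc n" _ "Suc n"]) auto
    also have "\<dots> = (if i = 0 then 1 else 0)" using W i by (simp add: unitary_mat_def)
    finally show ?thesis by simp
  qed
  with W show thesis by (rule that)
qed

lemma hermitian_mat_unitary_conj:
  assumes "hermitian_mat n A" "W \<in> carrier_mat n n"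
  shows "hermitian_mat n (adj W * A * W)"
  using assms unfolding hermitian_mat_def
  by (simp add: adj_mult[of _ n n _ n] assoc_mult_mat[of _ n n _ n _ n])

theorem hermitian_mat_spectral_decomp:
  "hermitian_mat n A \<Longrightarrow> \<exists>U lam. spectral_decomp n A U lam"
proof (induction n arbitrary: A)
  case 0
  then have A: "A \<in> carrier_mat 0 0" unfolding hermitian_mat_def by auto
  show ?case unfolding spectral_decomp_def unitary_mat_def
    by (rule exI[of _ "1\<^sub>m 0"], rule exI[of _ "\<lambda>_. 0"]) (use A in \<open>auto intro!: eq_matI\<close>)
next
  case (Suc n A)
  have A: "A \<in> carrier_mat (Suc n) (Suc n)" using Suc.prems unfolding hermitian_mat_def by auto
  obtain W e where W: "unitary_mat (Suc n) W"
    and col: "\<And>i. i < Suc n \<Longrightarrow> (adj W * A * W) $$ (i,0) = (if i = 0 then e else 0)"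
    by (rule unitary_conj_first_col_eigen[OF A]) auto
  define A' where "A' = adj W * A * W"
  have herm: "hermitian_mat (Suc n) A'"
    unfolding A'_def using Suc.prems unitary_mat_carrier[OF W] by (rule hermitian_mat_unitary_conj)
  have "A' $$ (i,0) = (if i = 0 then e else 0)" if "i < Suc n" for i
    using col[OF that] by (simp add: A'_def)
  then have block: "A' = block_diag1 (of_real (Re e)) (lower_block A')" "hermitian_mat n (lower_block A')"
    using hermitian_mat_first_col[OF herm] by blast+
  obtain U lam where "spectral_decomp n (lower_block A') U lam"
    using Suc.IH[OF block(2)] by blast
  then have "spectral_decomp (Suc n) A' (block_diag1 1 U) (\<lambda>i. if i = 0 then Re e else lam (i - 1))"
    by (subst block(1)) (rule spectral_decomp_block_diag1)
  then show ?case unfolding A'_def using spectral_decomp_unitary_conj[OF W A] by blast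
qed

lemma eig_decomp_spectral_decomp:
  assumes "hermitian_mat n \<rho>"
  shows "spectral_decomp n \<rho> (fst (eig_decomp n \<rho>)) (snd (eig_decomp n \<rho>))"
proof -
  obtain U lam where "spectral_decomp n \<rho> U lam"
    using hermitian_mat_spectral_decomp[OF assms] by blast
  then have "\<exists>p. spectral_decomp n \<rho> (fst p) (snd p)" by (intro exI[of _ "(U, lam)"]) simp
  then show ?thesis unfolding eig_decomp_def by (rule someI_ex)
qed

section \<open>Positive matrices and square roots\<close>

lemma dim_mat_diag[simp]: "dim_row (mat_diag n d) = n" "dim_col (mat_diag n d) = n"
  by (simp_all add: mat_diag_def)

lemma index_mat_diag_mult:
  "X \<in> carrier_mat n m \<Longrightarrow> i < n \<Longrightarrow> j < m \<Longrightarrow> (mat_diag n d * X) $$ (i,j) = d i * X $$ (i,j)"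
  by (subst mat_diag_mult_left[of _ n m]) auto

lemma index_mult_mat_diag:
  "X \<in> carrier_mat n m \<Longrightarrow> i < n \<Longrightarrow> j < m \<Longrightarrow> (X * mat_diag m d) $$ (i,j) = X $$ (i,j) * d j"
  by (subst mat_diag_mult_right[of _ n m]) auto

lemma psd_mat_diag:
  assumes "\<And>i. i < n \<Longrightarrow> 0 \<le> d i"
  shows "psd_mat n (mat_diag n (\<lambda>i. complex_of_real (d i)))"
  unfolding psd_mat_def hermitian_mat_def Re_qform_mat_diag
  using assms by (auto intro!: sum_nonneg)

lemma pd_mat_diag:
  assumes pos: "\<And>i. i < n \<Longrightarrow> 0 < d i"
  shows "pd_mat n (mat_diag n (\<lambda>i. complex_of_real (d i)))"
  unfolding pd_mat_def hermitian_mat_def Re_qform_mat_diag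
proof (intro conjI allI impI)
  fix v :: "nat \<Rightarrow> complex" assume "\<exists>i<n. v i \<noteq> 0"
  then obtain k where k: "k < n" "v k \<noteq> 0" by blast
  have "0 < d k * (cmod (v k))\<^sup>2" using pos k by simp
  also have "\<dots> \<le> (\<Sum>i<n. d i * (cmod (v i))\<^sup>2)"
    using k pos by (intro member_le_sum) (auto intro!: mult_nonneg_nonneg simp: less_imp_le)
  finally show "0 < (\<Sum>i<n. d i * (cmod (v i))\<^sup>2)" .
qed auto

lemma psd_mat_unitary_conj:
  assumes "psd_mat n S" "V \<in> carrier_mat n n"
  shows "psd_mat n (adj V * S * V)"
proof -
  have "hermitian_mat n (adj V * S * V)"
    using assms by (intro hermitian_mat_unitary_conj) (auto simp: psd_mat_def)
  then show ?thesis
    using assms unfolding psd_mat_def hermitian_mat_def by (simp add: qform_adj_mult_mult)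
qed

lemma pd_mat_add_psd:
  assumes "psd_mat n T" "pd_mat n R"
  shows "pd_mat n (T + R)"
  using assms unfolding pd_mat_def psd_mat_def hermitian_mat_def
  by (auto simp: adj_add qform_add add_nonneg_pos)

lemma pd_mat_mult_eq_zero:
  assumes P: "pd_mat n P" and X: "X \<in> carrier_mat n m" and PX: "P * X = 0\<^sub>m n m"
  shows "X = 0\<^sub>m n m"
proof (rule eq_matI)
  fix i j assume "i < dim_row (0\<^sub>m n m :: complex mat)" "j < dim_col (0\<^sub>m n m :: complex mat)"
  then have i: "i < n" and j: "j < m" by auto
  have Pc: "P \<in> carrier_mat n n" using P unfolding pd_mat_def hermitian_mat_def by simp
  define w where "w k = X $$ (k,j)" for k
  have "(\<Sum>k<n. P $$ (a,k) * w k) = 0" if "a < n" for a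
    using PX index_mult_mat_sum[OF Pc X that j] that j by (simp add: w_def)
  then have "qform n P w = 0"
    unfolding qform_def by (simp add: mult.assoc flip: sum_distrib_left)
  then have "\<not> (\<exists>k<n. w k \<noteq> 0)" using P unfolding pd_mat_def by force
  then show "X $$ (i,j) = 0\<^sub>m n m $$ (i,j)" using i j by (simp add: w_def)
qed (use X in auto)

lemma commute_mat_diag_fun:
  assumes T: "T \<in> carrier_mat n n"
    and TD: "T * mat_diag n (\<lambda>i. complex_of_real (d i)) = mat_diag n (\<lambda>i. complex_of_real (d i)) * T"
  shows "T * mat_diag n (\<lambda>i. complex_of_real (g (d i))) = mat_diag n (\<lambda>i. complex_of_real (g (d i))) * T"
proof (rule eq_matI)
  fix i j assume "i < dim_row (mat_diag n (\<lambda>i. complex_of_real (g (d i))) * T)"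
    "j < dim_col (mat_diag n (\<lambda>i. complex_of_real (g (d i))) * T)"
  then have i: "i < n" and j: "j < n" using T by auto
  have "T $$ (i,j) * of_real (d j) = of_real (d i) * T $$ (i,j)"
    using arg_cong[OF TD, of "\<lambda>M. M $$ (i,j)"] T i j
    by (simp add: index_mat_diag_mult index_mult_mat_diag del: index_mult_mat)
  then have "T $$ (i,j) = 0 \<or> d i = d j" by (auto simp: mult.commute)
  then show "(T * mat_diag n (\<lambda>i. complex_of_real (g (d i)))) $$ (i,j)
      = (mat_diag n (\<lambda>i. complex_of_real (g (d i))) * T) $$ (i,j)"
    using T i j by (auto simp: index_mat_diag_mult index_mult_mat_diag simp del: index_mult_mat)
qed (use T in auto)

text \<open>\<open>T\<close> commutes with \<open>D = T\<^sup>2\<close> and hence with \<open>R = sqrt D\<close>, so \<open>(T + R) (T - R) = T\<^sup>2 - R\<^sup>2 = 0\<close>;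
  as \<open>T + R\<close> is positive definite, \<open>T = R\<close>.\<close>
lemma psd_sqrt_mat_diag_unique:
  assumes pos: "\<And>i. i < n \<Longrightarrow> 0 < d i" and T: "psd_mat n T"
    and TT: "T * T = mat_diag n (\<lambda>i. complex_of_real (d i))"
  shows "T = mat_diag n (\<lambda>i. complex_of_real (sqrt (d i)))"
proof -
  define D R where "D = mat_diag n (\<lambda>i. complex_of_real (d i))"
    and "R = mat_diag n (\<lambda>i. complex_of_real (sqrt (d i)))"
  have Tc: "T \<in> carrier_mat n n" using T unfolding psd_mat_def hermitian_mat_def by simp
  have Rc: "R \<in> carrier_mat n n" unfolding R_def by simp
  have "complex_of_real (sqrt (d i)) * complex_of_real (sqrt (d i)) = complex_of_real (d i)" if "i < n" for i
    using pos[OF that] by (simp flip: of_real_mult)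
  then have RR: "R * R = D"
    unfolding R_def D_def mat_diag_diag by (intro eq_matI) (auto simp: mat_diag_def)
  have "T * D = D * T"
    unfolding TT[folded D_def, symmetric] using Tc by (simp add: assoc_mult_mat[of _ n n _ n _ n])
  then have TR: "T * R = R * T"
    unfolding D_def R_def by (rule commute_mat_diag_fun[OF Tc])
  have "(T + R) * (T - R) = (T + R) * T - (T + R) * R"
    using Tc Rc by (intro mult_minus_distrib_mat[of _ n n]) auto
  also have "\<dots> = (T * T + R * T) - (T * R + R * R)"
    using Tc Rc by (simp only: add_mult_distrib_mat[of _ n n])
  also have "\<dots> = 0\<^sub>m n n"
    using Tc Rc by (intro eq_matI) (auto simp: TT TR RR D_def)
  finally have prod: "(T + R) * (T - R) = 0\<^sub>m n n" .
  have "pd_mat n (T + R)"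
    unfolding R_def using T pos by (intro pd_mat_add_psd pd_mat_diag) auto
  then have diff: "T - R = 0\<^sub>m n n"
    using prod Tc Rc by (intro pd_mat_mult_eq_zero[of n "T + R" "T - R" n]) auto
  show ?thesis unfolding R_def[symmetric]
  proof (rule eq_matI)
    fix i j assume "i < dim_row R" "j < dim_col R"
    then show "T $$ (i,j) = R $$ (i,j)"
      using arg_cong[OF diff, of "\<lambda>M. M $$ (i,j)"] Tc Rc by simp
  qed (use Tc Rc in auto)
qed

section \<open>Informations in an eigenbasis\<close>

lemma comm_carrier[simp]: "X \<in> carrier_mat n n \<Longrightarrow> Y \<in> carrier_mat n n \<Longrightarrow> comm X Y \<in> carrier_mat n n"
  unfolding comm_def by (simp add: minus_carrier_mat)

locale unitary_basis =
  fixes n :: nat and U :: "complex mat"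
  assumes unitary: "unitary_mat n U"
begin

lemma U_carrier[simp]: "U \<in> carrier_mat n n"
  using unitary by (rule unitary_mat_carrier)

lemma adj_U_mult_U[simp]: "adj U * U = 1\<^sub>m n"
  using unitary unfolding unitary_mat_def by blast

lemma U_mult_adj_U[simp]: "U * adj U = 1\<^sub>m n"
  using unitary by (rule unitary_mat_right_inverse)

lemma U_mult_adj_U_mult[simp]: "Z \<in> carrier_mat n n \<Longrightarrow> U * (adj U * Z) = Z"
  by (simp flip: assoc_mult_mat[of U n n "adj U" n Z n])

lemma adj_U_mult_U_mult[simp]: "Z \<in> carrier_mat n n \<Longrightarrow> adj U * (U * Z) = Z"
  by (simp flip: assoc_mult_mat[of "adj U" n n U n Z n])

definition coords :: "complex mat \<Rightarrow> complex mat" where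
  "coords X = adj U * X * U"

definition spectral_op :: "(nat \<Rightarrow> real) \<Rightarrow> complex mat" where
  "spectral_op d = U * mat_diag n (\<lambda>i. complex_of_real (d i)) * adj U"

lemma coords_carrier[simp]: "X \<in> carrier_mat n n \<Longrightarrow> coords X \<in> carrier_mat n n"
  unfolding coords_def by simp

lemma spectral_op_carrier[simp]: "spectral_op d \<in> carrier_mat n n"
  unfolding spectral_op_def by simp

lemma coords_mult: "X \<in> carrier_mat n n \<Longrightarrow> Y \<in> carrier_mat n n \<Longrightarrow> coords (X * Y) = coords X * coords Y"
  unfolding coords_def by (simp add: assoc_mult_mat[of _ n n _ n _ n])

lemma coords_add: "X \<in> carrier_mat n n \<Longrightarrow> Y \<in> carrier_mat n n \<Longrightarrow> coords (X + Y) = coords X + coords Y"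
  unfolding coords_def
  by (simp add: mult_add_distrib_mat[of _ n n _ n] add_mult_distrib_mat[of _ n n _ _ n])

lemma coords_minus: "X \<in> carrier_mat n n \<Longrightarrow> Y \<in> carrier_mat n n \<Longrightarrow> coords (X - Y) = coords X - coords Y"
  unfolding coords_def
  by (simp add: mult_minus_distrib_mat[of _ n n _ n] minus_mult_distrib_mat[of _ n n _ _ n])

lemma coords_smult: "X \<in> carrier_mat n n \<Longrightarrow> coords (c \<cdot>\<^sub>m X) = c \<cdot>\<^sub>m coords X"
  unfolding coords_def by (simp add: mult_smult_distrib[of _ n n _ n] mult_smult_assoc_mat[of _ n n _ n])

lemma coords_inverse: "X \<in> carrier_mat n n \<Longrightarrow> U * coords X * adj U = X"
  unfolding coords_def by (simp add: assoc_mult_mat[of _ n n _ n _ n])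

lemma coords_inj: "X \<in> carrier_mat n n \<Longrightarrow> Y \<in> carrier_mat n n \<Longrightarrow> coords X = coords Y \<Longrightarrow> X = Y"
  by (metis coords_inverse)

lemma coords_conj: "M \<in> carrier_mat n n \<Longrightarrow> coords (U * M * adj U) = M"
  unfolding coords_def by (simp add: assoc_mult_mat[of _ n n _ n _ n])

lemma coords_spectral_op: "coords (spectral_op d) = mat_diag n (\<lambda>i. complex_of_real (d i))"
  unfolding spectral_op_def by (simp add: coords_conj)

lemma tr_coords: "X \<in> carrier_mat n n \<Longrightarrow> tr (coords X) = tr X"
  unfolding coords_def using tr_mult_commute[of "adj U * X" n n U] by simp

lemma adj_coords: "X \<in> carrier_mat n n \<Longrightarrow> adj (coords X) = coords (adj X)"
  unfolding coords_def by (simp add: adj_mult[of _ n n _ n] assoc_mult_mat[of _ n n _ n _ n])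

lemma spectral_op_mult: "spectral_op d * spectral_op e = spectral_op (\<lambda>i. d i * e i)"
  by (rule coords_inj) (simp_all add: coords_mult coords_spectral_op)

lemma spectral_op_cong:
  "(\<And>i. i < n \<Longrightarrow> d i = e i) \<Longrightarrow> spectral_op d = spectral_op e"
  unfolding spectral_op_def by (intro arg_cong2[of _ _ _ _ "\<lambda>M N. U * M * N"] eq_matI) (auto simp: mat_diag_def)

lemma psd_spectral_op: "(\<And>i. i < n \<Longrightarrow> 0 \<le> d i) \<Longrightarrow> psd_mat n (spectral_op d)"
  unfolding spectral_op_def using psd_mat_unitary_conj[OF psd_mat_diag, of n d "adj U"] by simp

lemma index_coords_comm_spectral_op:
  assumes "X \<in> carrier_mat n n" "i < n" "j < n"
  shows "coords (comm (spectral_op d) X) $$ (i,j) = of_real (d i - d j) * coords X $$ (i,j)"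
proof -
  have "coords (comm (spectral_op d) X)
      = mat_diag n (\<lambda>i. complex_of_real (d i)) * coords X - coords X * mat_diag n (\<lambda>i. complex_of_real (d i))"
    using assms by (simp add: comm_def coords_minus coords_mult coords_spectral_op)
  then show ?thesis
    using assms carrier_matD[OF coords_carrier[OF assms(1)]]
      index_mat_diag_mult[OF coords_carrier[OF assms(1)] assms(2,3)]
      index_mult_mat_diag[OF coords_carrier[OF assms(1)] assms(2,3)]
    by (simp add: algebra_simps)
qed

lemma coords_adj_mult_conj:
  assumes "X \<in> carrier_mat n n" "Z \<in> carrier_mat n n"
  shows "tr (adj X * (U * Z * adj U)) = tr (adj (coords X) * Z)"
proof -
  have "tr (adj X * (U * Z * adj U)) = tr (coords (adj X * (U * Z * adj U)))"
    using assms by (simp add: tr_coords)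
  also have "coords (adj X * (U * Z * adj U)) = adj (coords X) * Z"
    using assms by (simp add: coords_mult[of "adj X" "U * Z * adj U"] adj_coords coords_conj)
  finally show ?thesis .
qed

end

lemma spectral_decomp_pd_pos:
  assumes pd: "pd_mat n \<rho>" and sd: "spectral_decomp n \<rho> U lam" and i: "i < n"
  shows "0 < lam i"
proof -
  interpret unitary_basis n U using sd unfolding spectral_decomp_def by unfold_locales auto
  define v where "v k = U $$ (k,i)" for k
  have e: "(\<Sum>k<n. adj U $$ (a,k) * v k) = of_bool (a = i)" if "a < n" for a
  proof -
    have "(\<Sum>k<n. adj U $$ (a,k) * v k) = (adj U * U) $$ (a,i)"
      unfolding v_def using that i by (subst index_mult_mat_sum[of _ n n _ n]) auto
    then show ?thesis using that i by simp
  qed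
  have "\<rho> = adj (adj U) * mat_diag n (\<lambda>i. complex_of_real (lam i)) * adj U"
    using sd unfolding spectral_decomp_def by simp
  then have "qform n \<rho> v = qform n (mat_diag n (\<lambda>i. complex_of_real (lam i))) (\<lambda>a. of_bool (a = i))"
    using qform_adj_mult_mult[of "adj U" n "mat_diag n (\<lambda>i. complex_of_real (lam i))" v] e
    by (simp add: qform_def)
  also have "\<dots> = of_real (lam i)" using i by (simp add: qform_unit_vec mat_diag_def)
  finally have "qform n \<rho> v = of_real (lam i)" .
  moreover have "\<exists>k<n. v k \<noteq> 0"
  proof (rule ccontr)
    assume "\<not> (\<exists>k<n. v k \<noteq> 0)"
    then show False using e[OF i] by simp
  qed
  ultimately show ?thesis using pd unfolding pd_mat_def by force
qed

locale eigenbasis = unitary_basis +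
  fixes lam :: "nat \<Rightarrow> real" and rho A :: "complex mat"
  assumes rho_spectral: "rho = U * mat_diag n (\<lambda>i. complex_of_real (lam i)) * adj U"
    and lam_pos: "\<And>i. i < n \<Longrightarrow> 0 < lam i"
    and hermitian_A: "hermitian_mat n A"
begin

lemma rho_eq: "rho = spectral_op lam"
  unfolding spectral_op_def by (rule rho_spectral)

lemma A_carrier[simp]: "A \<in> carrier_mat n n"
  using hermitian_A unfolding hermitian_mat_def by simp

lemma rho_carrier[simp]: "rho \<in> carrier_mat n n"
  unfolding rho_eq by simp

lemma coords_A_swap:
  assumes "i < n" "j < n"
  shows "coords A $$ (j,i) = cnj (coords A $$ (i,j))"
proof -
  have "adj (coords A) = coords A"
    using hermitian_A unfolding hermitian_mat_def by (simp add: adj_coords)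
  then have "coords A $$ (j,i) = adj (coords A) $$ (j,i)" by simp
  also have "\<dots> = cnj (coords A $$ (i,j))"
    using assms carrier_matD[OF coords_carrier[OF A_carrier]] by simp
  finally show ?thesis .
qed

lemma cmod_coords_A_swap: "i < n \<Longrightarrow> j < n \<Longrightarrow> cmod (coords A $$ (j,i)) = cmod (coords A $$ (i,j))"
  using coords_A_swap[of i j] by simp

definition info_sum :: "(real \<Rightarrow> real \<Rightarrow> real) \<Rightarrow> real" where
  "info_sum c = (\<Sum>i<n. \<Sum>l<n. (lam i - lam l)\<^sup>2 * (cmod (coords A $$ (i,l)))\<^sup>2 * c (lam i) (lam l))"

lemma info_sum_mono:
  assumes "\<And>x y. 0 < x \<Longrightarrow> 0 < y \<Longrightarrow> c x y \<le> c' x y"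
  shows "info_sum c \<le> info_sum c'"
  unfolding info_sum_def using assms lam_pos by (intro sum_mono mult_left_mono) auto

lemma info_sum_cong:
  "(\<And>x y. 0 < x \<Longrightarrow> 0 < y \<Longrightarrow> c x y = c' x y) \<Longrightarrow> info_sum c = info_sum c'"
  by (intro antisym info_sum_mono) auto

lemma info_sum_scale: "info_sum (\<lambda>x y. k * c x y) = k * info_sum c"
  unfolding info_sum_def by (simp add: sum_distrib_left mult_ac)

lemma info_sum_add: "info_sum (\<lambda>x y. c x y + c' x y) = info_sum c + info_sum c'"
  unfolding info_sum_def by (simp add: sum.distrib algebra_simps)

lemma info_sum_swap_args: "info_sum (\<lambda>x y. c y x) = info_sum c"
  unfolding info_sum_def
  by (subst (2) sum.swap, intro sum.cong refl) (simp add: cmod_coords_A_swap power2_commute)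

lemma info_sum_symmetrize: "info_sum c = info_sum (\<lambda>x y. (c x y + c y x) / 2)"
  using info_sum_scale[of "1 / 2" "\<lambda>x y. c x y + c y x"] info_sum_add[of c "\<lambda>x y. c y x"]
  by (simp add: info_sum_swap_args[of c])

lemma index_coords_comm_rho:
  assumes "i < n" "j < n"
  shows "coords (\<i> \<cdot>\<^sub>m comm rho A) $$ (i,j) = \<i> * of_real (lam i - lam j) * coords A $$ (i,j)"
proof -
  have C: "comm rho A \<in> carrier_mat n n" by simp
  have "coords (\<i> \<cdot>\<^sub>m comm rho A) $$ (i,j) = \<i> * coords (comm rho A) $$ (i,j)"
    using assms carrier_matD[OF coords_carrier[OF C]] by (simp add: coords_smult[OF C])
  then show ?thesis
    using index_coords_comm_spectral_op[OF A_carrier assms, of lam] by (simp add: rho_eq)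
qed

lemma coords_comm_rho_mult_swap:
  assumes "i < n" "l < n"
  shows "coords (\<i> \<cdot>\<^sub>m comm rho A) $$ (i,l) * coords (\<i> \<cdot>\<^sub>m comm rho A) $$ (l,i)
    = of_real ((lam i - lam l)\<^sup>2 * (cmod (coords A $$ (i,l)))\<^sup>2)"
proof -
  let ?a = "coords A $$ (i,l)"
  have "coords (\<i> \<cdot>\<^sub>m comm rho A) $$ (i,l) * coords (\<i> \<cdot>\<^sub>m comm rho A) $$ (l,i)
      = (\<i> * \<i>) * (of_real (lam i - lam l) * of_real (lam l - lam i)) * (?a * cnj ?a)"
    using assms by (simp add: index_coords_comm_rho coords_A_swap[of i l] mult_ac)
  also have "?a * cnj ?a = of_real ((cmod ?a)\<^sup>2)"
    by (simp add: cnj_mult_self mult.commute[of ?a])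
  finally show ?thesis by (simp add: power2_eq_square algebra_simps)
qed

lemma coords_rho: "coords rho = mat_diag n (\<lambda>i. complex_of_real (lam i))"
  by (simp add: rho_eq coords_spectral_op)

lemma cmod_coords_comm_rho:
  "i < n \<Longrightarrow> j < n \<Longrightarrow>
    (cmod (coords (\<i> \<cdot>\<^sub>m comm rho A) $$ (i,j)))\<^sup>2 = (lam i - lam j)\<^sup>2 * (cmod (coords A $$ (i,j)))\<^sup>2"
  by (simp add: index_coords_comm_rho norm_mult power_mult_distrib del: of_real_diff)

text \<open>\<open>mf_inv\<close> is defined through the chosen decomposition \<open>eig_decomp\<close>, hence the hypothesis.\<close>
lemma norm2_f_comm_rho:
  assumes eig: "eig_decomp n rho = (U, lam)"
  shows "norm2_f f n rho (\<i> \<cdot>\<^sub>m comm rho A) = info_sum (\<lambda>x y. 1 / m_f f x y)"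
proof -
  define C where "C = \<i> \<cdot>\<^sub>m comm rho A"
  define Y where "Y = coords C"
  define Z where "Z = mat n n (\<lambda>(i,j). Y $$ (i,j) / complex_of_real (m_f f (lam i) (lam j)))"
  have Cc: "C \<in> carrier_mat n n" and Yc: "Y \<in> carrier_mat n n" and Zc: "Z \<in> carrier_mat n n"
    by (simp_all add: C_def Y_def Z_def)
  have "mf_inv f n rho C = U * Z * adj U"
    unfolding mf_inv_def eig Z_def Y_def coords_def Let_def by simp
  then have "norm2_f f n rho C = Re (tr (adj Y * Z))"
    unfolding norm2_f_def Y_def using coords_adj_mult_conj[OF Cc Zc] by simp
  also have "tr (adj Y * Z) = (\<Sum>i<n. \<Sum>l<n. adj Y $$ (i,l) * Z $$ (l,i))"
    using Yc Zc by (intro tr_mult_sum) auto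
  also have "\<dots> = (\<Sum>i<n. \<Sum>l<n. of_real ((lam l - lam i)\<^sup>2 * (cmod (coords A $$ (l,i)))\<^sup>2
      / m_f f (lam l) (lam i)))"
  proof (intro sum.cong refl)
    fix i l assume "i \<in> {..<n}" "l \<in> {..<n}"
    then have i: "i < n" and l: "l < n" by auto
    have "adj Y $$ (i,l) * Z $$ (l,i) = cnj (Y $$ (l,i)) * Y $$ (l,i) / of_real (m_f f (lam l) (lam i))"
      using Yc i l by (simp add: Z_def)
    also have "\<dots> = of_real ((cmod (Y $$ (l,i)))\<^sup>2 / m_f f (lam l) (lam i))"
      by (simp add: cnj_mult_self)
    finally show "adj Y $$ (i,l) * Z $$ (l,i) = of_real ((lam l - lam i)\<^sup>2 * (cmod (coords A $$ (l,i)))\<^sup>2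
      / m_f f (lam l) (lam i))"
      using i l by (simp add: Y_def C_def cmod_coords_comm_rho)
  qed
  finally show ?thesis
    unfolding info_sum_def C_def by (subst sum.swap) (simp add: Re_sum)
qed

lemma I_f_eq:
  assumes "eig_decomp n rho = (U, lam)"
  shows "I_f f n rho A = info_sum (\<lambda>x y. f_zero f / (2 * m_f f x y))"
  using info_sum_scale[of "f_zero f / 2" "\<lambda>x y. 1 / m_f f x y"]
  by (simp add: I_f_def norm2_f_comm_rho[OF assms])

lemma index_coords_anticomm_rho:
  assumes "L \<in> carrier_mat n n" "i < n" "j < n"
  shows "coords (rho * L + L * rho) $$ (i,j) = of_real (lam i + lam j) * coords L $$ (i,j)"
proof -
  have "coords (rho * L + L * rho)
      = mat_diag n (\<lambda>i. complex_of_real (lam i)) * coords L + coords L * mat_diag n (\<lambda>i. complex_of_real (lam i))"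
    using assms by (simp add: coords_add coords_mult coords_rho)
  then show ?thesis
    using assms carrier_matD[OF coords_carrier[OF assms(1)]]
      index_mat_diag_mult[OF coords_carrier[OF assms(1)] assms(2,3)]
      index_mult_mat_diag[OF coords_carrier[OF assms(1)] assms(2,3)]
    by (simp add: algebra_simps)
qed

definition sld_coords :: "complex mat" where
  "sld_coords = mat n n (\<lambda>(i,j). 2 * coords (\<i> \<cdot>\<^sub>m comm rho A) $$ (i,j) / of_real (lam i + lam j))"

lemma sld_coords_carrier[simp]: "sld_coords \<in> carrier_mat n n"
  by (simp add: sld_coords_def)

lemma SLD_equation_iff:
  assumes L: "L \<in> carrier_mat n n"
  shows "rho * L + L * rho = 2 \<cdot>\<^sub>m (\<i> \<cdot>\<^sub>m comm rho A) \<longleftrightarrow> coords L = sld_coords"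
proof -
  have C: "\<i> \<cdot>\<^sub>m comm rho A \<in> carrier_mat n n" by simp
  have pos: "complex_of_real (lam i + lam j) \<noteq> 0" if "i < n" "j < n" for i j
    using lam_pos[OF that(1)] lam_pos[OF that(2)] by (simp del: of_real_add)
  have "rho * L + L * rho = 2 \<cdot>\<^sub>m (\<i> \<cdot>\<^sub>m comm rho A)
      \<longleftrightarrow> coords (rho * L + L * rho) = coords (2 \<cdot>\<^sub>m (\<i> \<cdot>\<^sub>m comm rho A))"
    using L C by (auto intro: coords_inj)
  also have "\<dots> \<longleftrightarrow> (\<forall>i<n. \<forall>j<n. of_real (lam i + lam j) * coords L $$ (i,j)
      = 2 * coords (\<i> \<cdot>\<^sub>m comm rho A) $$ (i,j))"
    using L C carrier_matD[OF coords_carrier[OF L]] carrier_matD[OF coords_carrier[OF C]]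
      carrier_matD[OF coords_carrier[of "rho * L + L * rho"]]
    by (auto simp: mat_eq_iff index_coords_anticomm_rho coords_smult[OF C])
  also have "\<dots> \<longleftrightarrow> coords L = sld_coords"
    using L carrier_matD[OF coords_carrier[OF L]] pos
    by (auto simp: mat_eq_iff sld_coords_def field_simps)
  finally show ?thesis .
qed

lemma SLD_eq: "SLD n rho A = U * sld_coords * adj U"
  unfolding SLD_def
proof (rule the_equality)
  show "U * sld_coords * adj U \<in> carrier_mat n n \<and>
      rho * (U * sld_coords * adj U) + U * sld_coords * adj U * rho = 2 \<cdot>\<^sub>m (\<i> \<cdot>\<^sub>m comm rho A)"
    by (simp add: SLD_equation_iff coords_conj)
  fix L assume "L \<in> carrier_mat n n \<and> rho * L + L * rho = 2 \<cdot>\<^sub>m (\<i> \<cdot>\<^sub>m comm rho A)"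
  then show "L = U * sld_coords * adj U"
    using SLD_equation_iff coords_inverse by metis
qed

lemma I_SLD_eq_info_sum_asym: "I_SLD n rho A = info_sum (\<lambda>x y. x / (x + y)\<^sup>2)"
proof -
  define K Y where "K = sld_coords" and "Y = coords (\<i> \<cdot>\<^sub>m comm rho A)"
  define L where "L = U * K * adj U"
  have Kc: "K \<in> carrier_mat n n" and Lc: "L \<in> carrier_mat n n" by (simp_all add: K_def L_def)
  have "coords L = K" unfolding L_def by (rule coords_conj[OF Kc])
  then have "coords (rho * L * L) = mat_diag n (\<lambda>i. complex_of_real (lam i)) * K * K"
    using Lc by (simp add: coords_mult[of "rho * L" L] coords_mult[of rho L] coords_rho)
  then have "tr (rho * L * L) = tr (mat_diag n (\<lambda>i. complex_of_real (lam i)) * K * K)"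
    using Lc by (metis tr_coords mult_carrier_mat_square rho_carrier)
  also have "\<dots> = (\<Sum>i<n. \<Sum>l<n. (mat_diag n (\<lambda>i. complex_of_real (lam i)) * K) $$ (i,l) * K $$ (l,i))"
    using Kc by (intro tr_mult_sum) auto
  also have "\<dots> = (\<Sum>i<n. \<Sum>l<n. of_real (4 * ((lam i - lam l)\<^sup>2 * (cmod (coords A $$ (i,l)))\<^sup>2
      * (lam i / (lam i + lam l)\<^sup>2))))"
  proof (intro sum.cong refl)
    fix i l assume "i \<in> {..<n}" "l \<in> {..<n}"
    then have i: "i < n" and l: "l < n" by auto
    have "(mat_diag n (\<lambda>i. complex_of_real (lam i)) * K) $$ (i,l) * K $$ (l,i)
        = 4 * of_real (lam i) * (Y $$ (i,l) * Y $$ (l,i)) / (of_real (lam i + lam l))\<^sup>2"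
      using i l Kc index_mat_diag_mult[OF Kc i l]
      by (simp add: K_def Y_def sld_coords_def power2_eq_square add.commute[of "lam l"] del: of_real_add)
    also have "\<dots> = of_real (4 * ((lam i - lam l)\<^sup>2 * (cmod (coords A $$ (i,l)))\<^sup>2
        * (lam i / (lam i + lam l)\<^sup>2)))"
      using i l by (simp add: Y_def coords_comm_rho_mult_swap)
    finally show "(mat_diag n (\<lambda>i. complex_of_real (lam i)) * K) $$ (i,l) * K $$ (l,i)
        = of_real (4 * ((lam i - lam l)\<^sup>2 * (cmod (coords A $$ (i,l)))\<^sup>2 * (lam i / (lam i + lam l)\<^sup>2)))" .
  qed
  finally have "Re (tr (rho * L * L)) = (\<Sum>i<n. \<Sum>l<n. 4 * ((lam i - lam l)\<^sup>2
      * (cmod (coords A $$ (i,l)))\<^sup>2 * (lam i / (lam i + lam l)\<^sup>2)))"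
    by (simp only: Re_sum Re_complex_of_real)
  also have "\<dots> = 4 * info_sum (\<lambda>x y. x / (x + y)\<^sup>2)"
    unfolding info_sum_def by (simp only: sum_distrib_left)
  finally show ?thesis
    unfolding I_SLD_def SLD_eq K_def[symmetric] L_def[symmetric] by simp
qed

lemma I_SLD_eq: "I_SLD n rho A = info_sum (\<lambda>x y. 1 / (2 * (x + y)))"
  unfolding I_SLD_eq_info_sum_asym
proof (subst info_sum_symmetrize, rule info_sum_cong)
  fix x y :: real assume "0 < x" "0 < y"
  then have "x + y \<noteq> 0" by simp
  have "x / (x + y)\<^sup>2 + y / (y + x)\<^sup>2 = (x + y) / (x + y)\<^sup>2"
    by (simp add: add.commute[of y x] add_divide_distrib)
  also have "\<dots> = 1 / (x + y)" using \<open>x + y \<noteq> 0\<close> by (simp add: power2_eq_square)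
  finally show "(x / (x + y)\<^sup>2 + y / (y + x)\<^sup>2) / 2 = 1 / (2 * (x + y))" by simp
qed

lemma mat_sqrt_rho: "mat_sqrt n rho = spectral_op (\<lambda>i. sqrt (lam i))"
  unfolding mat_sqrt_def
proof (rule the_equality)
  have "spectral_op (\<lambda>i. sqrt (lam i) * sqrt (lam i)) = rho"
    unfolding rho_eq using lam_pos by (intro spectral_op_cong) (simp add: less_imp_le)
  moreover have "psd_mat n (spectral_op (\<lambda>i. sqrt (lam i)))"
    using lam_pos by (intro psd_spectral_op) (simp add: less_imp_le)
  ultimately show "psd_mat n (spectral_op (\<lambda>i. sqrt (lam i)))
      \<and> spectral_op (\<lambda>i. sqrt (lam i)) * spectral_op (\<lambda>i. sqrt (lam i)) = rho"
    by (simp add: spectral_op_mult)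
next
  fix S assume "psd_mat n S \<and> S * S = rho"
  then have S: "psd_mat n S" and SS: "S * S = rho" by auto
  have Sc: "S \<in> carrier_mat n n" using S unfolding psd_mat_def hermitian_mat_def by simp
  have "psd_mat n (coords S)"
    unfolding coords_def using psd_mat_unitary_conj[OF S U_carrier] .
  moreover have "coords S * coords S = mat_diag n (\<lambda>i. complex_of_real (lam i))"
    using Sc by (simp flip: coords_mult add: SS coords_rho)
  ultimately have "coords S = mat_diag n (\<lambda>i. complex_of_real (sqrt (lam i)))"
    by (intro psd_sqrt_mat_diag_unique lam_pos)
  then show "S = spectral_op (\<lambda>i. sqrt (lam i))"
    using Sc coords_inj[of S "spectral_op (\<lambda>i. sqrt (lam i))"] by (simp add: coords_spectral_op)
qed

lemma I_WY_eq_sum: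
  "I_WY n rho A = (\<Sum>i<n. \<Sum>l<n. (sqrt (lam i) - sqrt (lam l))\<^sup>2 * (cmod (coords A $$ (i,l)))\<^sup>2 / 2)"
proof -
  define s where "s i = sqrt (lam i)" for i
  define E where "E = coords (comm (spectral_op s) A)"
  have Ec: "E \<in> carrier_mat n n" by (simp add: E_def)
  have E_entry: "E $$ (i,l) = of_real (s i - s l) * coords A $$ (i,l)" if "i < n" "l < n" for i l
    unfolding E_def using that by (rule index_coords_comm_spectral_op[OF A_carrier])
  have "tr (comm (spectral_op s) A * comm (spectral_op s) A) = tr (E * E)"
    unfolding E_def by (simp flip: tr_coords add: coords_mult)
  also have "\<dots> = (\<Sum>i<n. \<Sum>l<n. E $$ (i,l) * E $$ (l,i))"
    using Ec by (intro tr_mult_sum) auto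
  also have "\<dots> = (\<Sum>i<n. \<Sum>l<n. - of_real ((s i - s l)\<^sup>2 * (cmod (coords A $$ (i,l)))\<^sup>2))"
  proof (intro sum.cong refl)
    fix i l assume "i \<in> {..<n}" "l \<in> {..<n}"
    then have i: "i < n" and l: "l < n" by auto
    let ?a = "coords A $$ (i,l)"
    have "E $$ (i,l) * E $$ (l,i) = - (of_real ((s i - s l)\<^sup>2) * (?a * cnj ?a))"
      using i l by (simp add: E_entry coords_A_swap[of i l] power2_eq_square algebra_simps)
    also have "?a * cnj ?a = of_real ((cmod ?a)\<^sup>2)"
      by (simp add: cnj_mult_self mult.commute[of ?a])
    finally show "E $$ (i,l) * E $$ (l,i) = - of_real ((s i - s l)\<^sup>2 * (cmod ?a)\<^sup>2)" by simp
  qed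
  finally show ?thesis
    unfolding I_WY_def mat_sqrt_rho s_def[symmetric]
    by (simp add: Re_sum sum_negf sum_divide_distrib)
qed

lemma I_WY_eq: "I_WY n rho A = info_sum (\<lambda>x y. 1 / (2 * (sqrt x + sqrt y)\<^sup>2))"
  unfolding I_WY_eq_sum info_sum_def
proof (intro sum.cong refl)
  fix i l assume "i \<in> {..<n}" "l \<in> {..<n}"
  then have "0 < lam i" "0 < lam l" using lam_pos by auto
  define s t where "s = sqrt (lam i)" and "t = sqrt (lam l)"
  have pos: "0 < s" "0 < t" and diff: "lam i - lam l = (s - t) * (s + t)"
    using \<open>0 < lam i\<close> \<open>0 < lam l\<close> by (simp_all add: s_def t_def algebra_simps)
  have "(lam i - lam l)\<^sup>2 = (s - t)\<^sup>2 * (s + t)\<^sup>2"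
    unfolding diff by (rule power_mult_distrib)
  moreover have "s + t \<noteq> 0" using pos by simp
  ultimately show "(sqrt (lam i) - sqrt (lam l))\<^sup>2 * (cmod (coords A $$ (i,l)))\<^sup>2 / 2
      = (lam i - lam l)\<^sup>2 * (cmod (coords A $$ (i,l)))\<^sup>2 * (1 / (2 * (sqrt (lam i) + sqrt (lam l))\<^sup>2))"
    unfolding s_def[symmetric] t_def[symmetric] by (simp add: field_simps)
qed

end

theorem mainTheorem5:
  fixes n :: nat and \<rho> A :: "complex mat"
  assumes "density_mat n \<rho>"
    and "hermitian_mat n A"
  shows "(\<forall>f \<in> F_op_r. I_f f n \<rho> A \<le> I_SLD n \<rho> A \<and>
                         I_SLD n \<rho> A \<le> 1 / (2 * f_zero f) * I_f f n \<rho> A)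
         \<and> I_WY n \<rho> A \<le> I_SLD n \<rho> A \<and> I_SLD n \<rho> A \<le> 2 * I_WY n \<rho> A"
proof -
  obtain U lam where eig: "eig_decomp n \<rho> = (U, lam)" by (cases "eig_decomp n \<rho>")
  have pd: "pd_mat n \<rho>" using assms(1) unfolding density_mat_def by simp
  then have sd: "spectral_decomp n \<rho> U lam"
    using eig_decomp_spectral_decomp[of n \<rho>] eig unfolding pd_mat_def by simp
  interpret eigenbasis n U lam \<rho> A
    using sd spectral_decomp_pd_pos[OF pd sd] assms(2)
    by unfold_locales (auto simp: spectral_decomp_def)
  have "I_f f n \<rho> A \<le> I_SLD n \<rho> A \<and> I_SLD n \<rho> A \<le> 1 / (2 * f_zero f) * I_f f n \<rho> A"
    if "f \<in> F_op_r" for f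
  proof
    have f: "f \<in> F_op" and f0: "f_zero f \<noteq> 0" using that by (auto simp: F_op_r_def)
    show "I_f f n \<rho> A \<le> I_SLD n \<rho> A"
      unfolding I_f_eq[OF eig] I_SLD_eq by (rule info_sum_mono) (rule F_op_coeff_le_SLD_coeff[OF f])
    show "I_SLD n \<rho> A \<le> 1 / (2 * f_zero f) * I_f f n \<rho> A"
      unfolding I_f_eq[OF eig] I_SLD_eq info_sum_scale[symmetric]
      by (rule info_sum_mono) (rule SLD_coeff_le_F_op_coeff[OF f f0])
  qed
  moreover have "I_WY n \<rho> A \<le> I_SLD n \<rho> A" "I_SLD n \<rho> A \<le> 2 * I_WY n \<rho> A"
    unfolding I_WY_eq I_SLD_eq info_sum_scale[symmetric]
    by (rule info_sum_mono, erule (1) WY_coeff_bounds)+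
  ultimately show ?thesis by blast
qed

end
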